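(* Let $\alpha\in[0,1)$ and $u_1\in\mathbb R$. There exist $\tilde r\in(r_-,r_+)$ sufficiently close to $r_-$ and a constant $C_\alpha>0$ such that for all smooth functions $\phi$ on $\mathcal M$ $$\int_{\{r\le\tilde r\}\cap\{f^-\le u_1\}}\frac{1}{(-\Delta)^\alpha}\phi^2\,\mathrm{vol}\ \le\ C_\alpha\Big(\int_{\Sigma_{\tilde r}\cap\{f^-\le u_1\}}\phi^2\,\mathrm{vol}_{-r}+\int_{\{r\le\tilde r\}\cap\{f^-\le u_1\}}\frac{1}{(-\Delta)^\alpha}(e_3\phi)^2\,\mathrm{vol}\Big).$$
   Context: Fix $M>0$ and $a$ with $0<|a|<M$. Let $\Delta(r)=r^2-2Mr+a^2$ with roots $r_\pm=M\pm\sqrt{M^2-a^2}$, and $\rho^2=r^2+a^2\cos^2\theta$. The Kerr interior is $\mathcal M=\mathbb R_t\times(r_-,r_+)_r\times\mathbb S^2_{(\theta,\varphi)}$ with metric $g=g_{tt}dt^2+g_{t\varphi}(dt\otimes d\varphi+d\varphi\otimes dt)+\frac{\rho^2}{\Delta}dr^2+\rho^2d\theta^2+g_{\varphi\varphi}d\varphi^2$, where $g_{tt}=-1+\frac{2Mr}{\rho^2}$, $g_{t\varphi}=-\frac{2Mra\sin^2\theta}{\rho^2}$, $g_{\varphi\varphi}=\big(r^2+a^2+\frac{2Mra^2\sin^2\theta}{\rho^2}\big)\sin^2\theta$, with volume form $\mathrm{vol}=\rho^2\sin\theta\,dt\wedge dr\wedge d\theta\wedge d\varphi$. Let $r^*$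 satisfy $dr^*/dr=(r^2+a^2)/\Delta$, $v_-=r^*-t$, $f^-=v_--r+r_-$, and $\Sigma_c=\{r=c\}$ with induced volume form defined by $\mathrm{vol}=-dr\wedge\mathrm{vol}_{-r}$. $e_3=\frac{\Delta}{\rho^2}\partial_r-\frac1{\rho^2}\big((r^2+a^2)\partial_t+a\partial_\varphi\big)$ (Boyer–Lindquist coordinate fields). Integrals are of nonnegative functions, with values in $[0,\infty]$. *)

theory Defs
  imports "HOL-Analysis.Analysis"
begin

fun iter_pd :: "'a::euclidean_space list \<Rightarrow> ('a \<Rightarrow> real) \<Rightarrow> 'a \<Rightarrow> real" where
  "iter_pd [] f = f"
| "iter_pd (v # vs) f = (\<lambda>x. deriv (\<lambda>s. iter_pd vs f (x + s *\<^sub>R v)) 0)"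

definition smooth_on :: "'a::euclidean_space set \<Rightarrow> ('a \<Rightarrow> real) \<Rightarrow> bool" where
  "smooth_on U f \<longleftrightarrow> open U \<and>
     (\<forall>vs. set vs \<subseteq> Basis \<longrightarrow>
        continuous_on U (iter_pd vs f) \<and>
        (\<forall>v\<in>Basis. \<forall>x\<in>U. (\<lambda>s. iter_pd vs f (x + s *\<^sub>R v)) differentiable (at 0)))"

definition r_plus :: "real \<Rightarrow> real \<Rightarrow> real" where
  "r_plus M a = M + sqrt (M\<^sup>2 - a\<^sup>2)"

definition r_minus :: "real \<Rightarrow> real \<Rightarrow> real" where
  "r_minus M a = M - sqrt (M\<^sup>2 - a\<^sup>2)"

definition Delta :: "real \<Rightarrow> real \<Rightarrow> real \<Rightarrow> real" where
  "Delta M a r = r\<^sup>2 - 2 * M * r + a\<^sup>2"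

definition rho2 :: "real \<Rightarrow> real \<Rightarrow> real \<Rightarrow> real" where
  "rho2 a r \<theta> = r\<^sup>2 + a\<^sup>2 * (cos \<theta>)\<^sup>2"

text \<open>Points of the ambient space R_t x R_r x R^3; the Kerr interior
  M = R_t x (r_-, r_+) x S^2 is the set below, with S^2 the unit sphere in R^3.\<close>
type_synonym pt = "real \<times> real \<times> real \<times> real \<times> real"

definition kerr_interior :: "real \<Rightarrow> real \<Rightarrow> pt set" where
  "kerr_interior M a = {(t, r, x, y, z). r_minus M a < r \<and> r < r_plus M a \<and> x\<^sup>2 + y\<^sup>2 + z\<^sup>2 = 1}"

text \<open>A smooth function on the Kerr interior (a closed embedded submanifold of an open
  subset of R^5): restriction of a function smooth on an open neighbourhood.\<close>
definition smooth_on_kerr :: "real \<Rightarrow> real \<Rightarrow> (pt \<Rightarrow> real) \<Rightarrow> bool" where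
  "smooth_on_kerr M a F \<longleftrightarrow> (\<exists>U. kerr_interior M a \<subseteq> U \<and> smooth_on U F)"

definition BL :: "(pt \<Rightarrow> real) \<Rightarrow> real \<Rightarrow> real \<Rightarrow> real \<Rightarrow> real \<Rightarrow> real" where
  "BL F t r \<theta> \<phi> = F (t, r, sin \<theta> * cos \<phi>, sin \<theta> * sin \<phi>, cos \<theta>)"

definition e3 :: "real \<Rightarrow> real \<Rightarrow> (pt \<Rightarrow> real) \<Rightarrow> real \<Rightarrow> real \<Rightarrow> real \<Rightarrow> real \<Rightarrow> real" where
  "e3 M a F t r \<theta> \<phi> =
     Delta M a r / rho2 a r \<theta> * deriv (\<lambda>s. BL F t s \<theta> \<phi>) r
     - 1 / rho2 a r \<theta> * ((r\<^sup>2 + a\<^sup>2) * deriv (\<lambda>s. BL F s r \<theta> \<phi>) t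
                         + a * deriv (\<lambda>s. BL F t r \<theta> s) \<phi>)"

text \<open>f^- = v_- - r + r_-, with v_- = r^* - t.\<close>
definition f_minus :: "real \<Rightarrow> real \<Rightarrow> (real \<Rightarrow> real) \<Rightarrow> real \<Rightarrow> real \<Rightarrow> real" where
  "f_minus M a rstar t r = (rstar r - t) - r + r_minus M a"

text \<open>Spacetime integral over {r \<le> rt} \<inter> {f^- \<le> u1} (inside M) of a nonnegative function g
  against vol = rho^2 sin(theta) dt dr dtheta dphi (the poles theta = 0, pi and the
  meridian phi = 0 are null sets).\<close>
definition vol_int :: "real \<Rightarrow> real \<Rightarrow> (real \<Rightarrow> real) \<Rightarrow> real \<Rightarrow> real \<Rightarrow>
    (real \<Rightarrow> real \<Rightarrow> real \<Rightarrow> real \<Rightarrow> real) \<Rightarrow> ennreal" where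
  "vol_int M a rstar rt u1 g =
     (\<integral>\<^sup>+ p. (case p of (t, r, \<theta>, \<phi>) \<Rightarrow>
        (if r_minus M a < r \<and> r \<le> rt \<and> 0 < \<theta> \<and> \<theta> < pi \<and> 0 < \<phi> \<and> \<phi> < 2 * pi
            \<and> f_minus M a rstar t r \<le> u1
         then ennreal (g t r \<theta> \<phi> * rho2 a r \<theta> * sin \<theta>) else 0))
      \<partial>(lborel :: (real \<times> real \<times> real \<times> real) measure))"

text \<open>Integral over Sigma_rt \<inter> {f^- \<le> u1} against vol_{-r} = rho^2 sin(theta) dt dtheta dphi
  (from vol = - dr \<and> vol_{-r}).\<close>
definition surf_int :: "real \<Rightarrow> real \<Rightarrow> (real \<Rightarrow> real) \<Rightarrow> real \<Rightarrow> real \<Rightarrow>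
    (real \<Rightarrow> real \<Rightarrow> real \<Rightarrow> real \<Rightarrow> real) \<Rightarrow> ennreal" where
  "surf_int M a rstar rt u1 g =
     (\<integral>\<^sup>+ p. (case p of (t, \<theta>, \<phi>) \<Rightarrow>
        (if 0 < \<theta> \<and> \<theta> < pi \<and> 0 < \<phi> \<and> \<phi> < 2 * pi \<and> f_minus M a rstar t rt \<le> u1
         then ennreal (g t rt \<theta> \<phi> * rho2 a rt \<theta> * sin \<theta>) else 0))
      \<partial>(lborel :: (real \<times> real \<times> real) measure))"

end

(*
  Along the curves  r \<mapsto> (T - r^*(r), r, theta, P - eta(r)),  where eta is a primitive of a/Delta,
  the vector field e_3 is Delta/rho^2 times the velocity, so e_3 phi = (Delta/rho^2) g' for the
  restriction g of phi to such a curve.  In the coordinates (T, r, theta, P) the volume form is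
  unchanged (translation in t, and in the 2 pi-periodic angle phi), and the region {f^- \<le> u_1}
  becomes {2 r^* - r \<le> u_1 + T - r_-}, an interval [c, r~] on each curve because r^* decreases.
  Near r_- one has -Delta ~ (r - r_-), and integrating the derivative of (r - r_-)^(1 - alpha) g^2
  gives the weighted Hardy inequality
    int g^2 (r - r_-)^(-alpha) \<le> C g(r~)^2 + C int g'^2 (r - r_-)^(2 - alpha),
  which is the estimate on each curve; integrating over (T, theta, P) gives the theorem.
*)

theory Submission
  imports Defs
begin

section \<open>Smooth functions and their differentials\<close>

lemma norm_partial_sum_Basis_le:
  fixes h :: "'a::euclidean_space"
  assumes B: "insert b B \<subseteq> Basis" "b \<notin> B" and "\<bar>s\<bar> \<le> norm h"
  shows "norm ((\<Sum>b\<in>B. (h \<bullet> b) *\<^sub>R b) + s *\<^sub>R b) \<le> DIM('a) * norm h"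
proof -
  have "finite B" using B finite_subset[OF _ finite_Basis] by blast
  have "card (insert b B) \<le> DIM('a)" using B by (intro card_mono) auto
  then have card: "real (card B) + 1 \<le> DIM('a)" using \<open>finite B\<close> B by simp
  have "norm ((\<Sum>b\<in>B. (h \<bullet> b) *\<^sub>R b) + s *\<^sub>R b) \<le> (\<Sum>b\<in>B. norm ((h \<bullet> b) *\<^sub>R b)) + norm (s *\<^sub>R b)"
    by (intro norm_triangle_le add_right_mono norm_sum)
  also have "\<dots> \<le> (\<Sum>b\<in>B. norm h) + norm h"
    using B assms(3) by (intro add_mono sum_mono) (auto simp: Basis_le_norm)
  also have "\<dots> \<le> DIM('a) * norm h"
    using mult_right_mono[OF card norm_ge_zero, of h] by (simp add: algebra_simps)
  finally show ?thesis .
qed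

lemma increment_along_line_bound:
  fixes f :: "'a::real_normed_vector \<Rightarrow> real"
  assumes D: "\<And>s. \<bar>s\<bar> \<le> \<bar>c\<bar> \<Longrightarrow> ((\<lambda>t. f (y + s *\<^sub>R v + t *\<^sub>R v)) has_real_derivative D s) (at 0)"
    and close: "\<And>s. \<bar>s\<bar> \<le> \<bar>c\<bar> \<Longrightarrow> \<bar>D s - d\<bar> \<le> e"
  shows "\<bar>f (y + c *\<^sub>R v) - f y - c * d\<bar> \<le> e * \<bar>c\<bar>"
proof -
  have "((\<lambda>s. f (y + s *\<^sub>R v) - s * d) has_field_derivative D s - d) (at s within cball 0 \<bar>c\<bar>)"
    if "s \<in> cball 0 \<bar>c\<bar>" for s
  proof -
    have "((\<lambda>t. f (y + s *\<^sub>R v + t *\<^sub>R v)) has_real_derivative D s) (at (s + - s))"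
      using D that by simp
    then have "((\<lambda>t. f (y + s *\<^sub>R v + (t + - s) *\<^sub>R v)) has_real_derivative D s) (at s)"
      by (rule DERIV_shift[THEN iffD1])
    moreover have "(\<lambda>t. f (y + s *\<^sub>R v + (t + - s) *\<^sub>R v)) = (\<lambda>t. f (y + t *\<^sub>R v))"
      by (simp add: algebra_simps)
    ultimately have "((\<lambda>t. f (y + t *\<^sub>R v)) has_real_derivative D s) (at s)"
      by (simp only:)
    from DERIV_diff[OF this DERIV_cmult_Id[of d s]] show ?thesis
      by (simp add: has_field_derivative_at_within mult.commute)
  qed
  moreover have "norm (D s - d) \<le> e" if "s \<in> cball 0 \<bar>c\<bar>" for s
    using close that by simp
  ultimately have "norm ((f (y + c *\<^sub>R v) - c * d) - (f (y + 0 *\<^sub>R v) - 0 * d)) \<le> e * norm (c - 0)"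
    by (intro field_differentiable_bound[of "cball 0 \<bar>c\<bar>"]) auto
  then show ?thesis by simp
qed

lemma coordinate_increment_small:
  fixes f :: "'a::euclidean_space \<Rightarrow> real"
  assumes U: "open U" "x \<in> U"
    and D: "\<And>y. y \<in> U \<Longrightarrow> ((\<lambda>s. f (y + s *\<^sub>R b)) has_real_derivative D y) (at 0)"
    and C: "continuous_on U D"
    and B: "insert b B \<subseteq> Basis" "b \<notin> B" and "e > 0"
  shows "\<forall>\<^sub>F h in nhds 0. \<bar>f (x + (\<Sum>b\<in>B. (h \<bullet> b) *\<^sub>R b) + (h \<bullet> b) *\<^sub>R b)
    - f (x + (\<Sum>b\<in>B. (h \<bullet> b) *\<^sub>R b)) - (h \<bullet> b) * D x\<bar> \<le> e * norm h"
proof -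
  have "continuous (at x) D"
    using C U continuous_on_eq_continuous_at by blast
  then obtain \<delta>1 where "\<delta>1 > 0" and \<delta>1: "\<And>y. dist y x < \<delta>1 \<Longrightarrow> \<bar>D y - D x\<bar> < e"
    using \<open>e > 0\<close> unfolding continuous_at_eps_delta dist_real_def by blast
  obtain \<delta>2 where "\<delta>2 > 0" "ball x \<delta>2 \<subseteq> U" using U open_contains_ball by blast
  define \<delta> where "\<delta> = min \<delta>1 \<delta>2"
  have "\<forall>\<^sub>F h in nhds 0. DIM('a) * norm (h::'a) < \<delta>"
    unfolding eventually_nhds_metric
  proof (intro exI[of _ "\<delta> / DIM('a)"] conjI allI impI)
    show "\<delta> / DIM('a) > 0" using \<open>\<delta>1 > 0\<close> \<open>\<delta>2 > 0\<close> by (simp add: \<delta>_def)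
    fix h :: 'a assume "dist h 0 < \<delta> / DIM('a)"
    then show "DIM('a) * norm h < \<delta>" by (simp add: field_simps)
  qed
  then show ?thesis
  proof (rule eventually_mono)
    fix h :: 'a assume h: "DIM('a) * norm h < \<delta>"
    define y where "y = x + (\<Sum>b\<in>B. (h \<bullet> b) *\<^sub>R b)"
    define c where "c = h \<bullet> b"
    have "\<bar>c\<bar> \<le> norm h" using B by (simp add: c_def Basis_le_norm)
    have near: "dist (y + s *\<^sub>R b) x < \<delta>" if "\<bar>s\<bar> \<le> \<bar>c\<bar>" for s
      using norm_partial_sum_Basis_le[OF B, of s h] that \<open>\<bar>c\<bar> \<le> norm h\<close> h
      by (simp add: y_def dist_norm)
    have "\<bar>f (y + c *\<^sub>R b) - f y - c * D x\<bar> \<le> e * \<bar>c\<bar>"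
    proof (rule increment_along_line_bound)
      fix s assume "\<bar>s\<bar> \<le> \<bar>c\<bar>"
      then have "dist (y + s *\<^sub>R b) x < \<delta>1" "dist (y + s *\<^sub>R b) x < \<delta>2"
        using near by (simp_all add: \<delta>_def)
      then show "((\<lambda>t. f (y + s *\<^sub>R b + t *\<^sub>R b)) has_real_derivative D (y + s *\<^sub>R b)) (at 0)"
        and "\<bar>D (y + s *\<^sub>R b) - D x\<bar> \<le> e"
        using D \<delta>1 \<open>ball x \<delta>2 \<subseteq> U\<close> by (auto simp: dist_commute less_imp_le)
    qed
    also have "\<dots> \<le> e * norm h"
      using \<open>e > 0\<close> \<open>\<bar>c\<bar> \<le> norm h\<close> by simp
    finally show "\<bar>f (x + (\<Sum>b\<in>B. (h \<bullet> b) *\<^sub>R b) + (h \<bullet> b) *\<^sub>R b)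
        - f (x + (\<Sum>b\<in>B. (h \<bullet> b) *\<^sub>R b)) - (h \<bullet> b) * D x\<bar> \<le> e * norm h"
      by (simp add: y_def c_def)
  qed
qed

lemma has_derivative_of_continuous_partials:
  fixes f :: "'a::euclidean_space \<Rightarrow> real"
  assumes U: "open U" "x \<in> U"
    and D: "\<And>b y. b \<in> Basis \<Longrightarrow> y \<in> U \<Longrightarrow> ((\<lambda>s. f (y + s *\<^sub>R b)) has_real_derivative D b y) (at 0)"
    and C: "\<And>b. b \<in> Basis \<Longrightarrow> continuous_on U (D b)"
  shows "(f has_derivative (\<lambda>h. \<Sum>b\<in>Basis. (h \<bullet> b) * D b x)) (at x)"
proof -
  define R where "R B h = f (x + (\<Sum>b\<in>B. (h \<bullet> b) *\<^sub>R b)) - f x - (\<Sum>b\<in>B. (h \<bullet> b) * D b x)"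
    for B and h :: 'a
  \<comment> \<open>Move from x to x + h one coordinate direction at a time.\<close>
  have "\<forall>e>0. \<forall>\<^sub>F h in nhds 0. \<bar>R B h\<bar> \<le> e * norm h" if "B \<subseteq> Basis" for B
    using that
  proof (induction B rule: infinite_finite_induct)
    case (infinite B)
    then show ?case using finite_subset[OF _ finite_Basis] by blast
  next
    case empty
    show ?case by (simp add: R_def)
  next
    case (insert b B)
    show ?case
    proof (intro allI impI)
      fix e :: real assume "e > 0"
      have "B \<subseteq> Basis" using insert.prems by simp
      from insert.IH[OF this, rule_format, of "e/2"] \<open>e > 0\<close>
      have "\<forall>\<^sub>F h in nhds 0. \<bar>R B h\<bar> \<le> e/2 * norm h" by simp
      moreover have "\<forall>\<^sub>F h in nhds 0. \<bar>f (x + (\<Sum>b\<in>B. (h \<bullet> b) *\<^sub>R b) + (h \<bullet> b) *\<^sub>R b)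
          - f (x + (\<Sum>b\<in>B. (h \<bullet> b) *\<^sub>R b)) - (h \<bullet> b) * D b x\<bar> \<le> e/2 * norm h"
        using insert \<open>e > 0\<close> by (intro coordinate_increment_small[OF U D C]) auto
      ultimately show "\<forall>\<^sub>F h in nhds 0. \<bar>R (insert b B) h\<bar> \<le> e * norm h"
      proof eventually_elim
        case (elim h)
        have "R (insert b B) h = R B h + (f (x + (\<Sum>b\<in>B. (h \<bullet> b) *\<^sub>R b) + (h \<bullet> b) *\<^sub>R b)
            - f (x + (\<Sum>b\<in>B. (h \<bullet> b) *\<^sub>R b)) - (h \<bullet> b) * D b x)"
          unfolding R_def using insert.hyps by (simp add: algebra_simps)
        then show ?case
          using elim abs_triangle_ineq[of "R B h"] by linarith
      qed
    qed
  qed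
  then have small: "\<forall>e>0. \<forall>\<^sub>F h in nhds 0. \<bar>R Basis h\<bar> \<le> e * norm h" by blast
  show ?thesis
    unfolding has_derivative_at_alt
  proof (intro conjI allI impI)
    show "bounded_linear (\<lambda>h. \<Sum>b\<in>Basis. h \<bullet> b * D b x)"
      by (intro bounded_linear_sum bounded_linear_mult_const bounded_linear_inner_left)
    fix e :: real assume "e > 0"
    with small obtain d where "d > 0" and d: "\<And>h. dist h 0 < d \<Longrightarrow> \<bar>R Basis h\<bar> \<le> e * norm h"
      unfolding eventually_nhds_metric by blast
    show "\<exists>d>0. \<forall>y. norm (y - x) < d \<longrightarrow>
        norm (f y - f x - (\<Sum>b\<in>Basis. (y - x) \<bullet> b * D b x)) \<le> e * norm (y - x)"
    proof (intro exI[of _ d] conjI allI impI \<open>d > 0\<close>)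
      fix y assume "norm (y - x) < d"
      then have "\<bar>R Basis (y - x)\<bar> \<le> e * norm (y - x)"
        using d by (simp add: dist_norm)
      then show "norm (f y - f x - (\<Sum>b\<in>Basis. (y - x) \<bullet> b * D b x)) \<le> e * norm (y - x)"
        by (simp add: R_def euclidean_representation)
    qed
  qed
qed

definition differential :: "('a::euclidean_space \<Rightarrow> real) \<Rightarrow> 'a \<Rightarrow> 'a \<Rightarrow> real" where
  "differential F x h = (\<Sum>b\<in>Basis. (h \<bullet> b) * iter_pd [b] F x)"

lemma differential_add: "differential F x (u + v) = differential F x u + differential F x v"
  by (simp add: differential_def inner_add_left distrib_right sum.distrib)

lemma differential_scaleR: "differential F x (c *\<^sub>R v) = c * differential F x v"
  by (simp add: differential_def sum_distrib_left mult_ac)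

lemma smooth_on_continuous: "smooth_on U F \<Longrightarrow> continuous_on U F"
  unfolding smooth_on_def by (metis empty_subsetI iter_pd.simps(1) list.set(1))

lemma smooth_on_continuous_partial:
  "smooth_on U F \<Longrightarrow> b \<in> Basis \<Longrightarrow> continuous_on U (iter_pd [b] F)"
  unfolding smooth_on_def by (metis empty_subsetI insert_subset list.set(1) list.set(2))

lemma has_derivative_differential:
  assumes F: "smooth_on U F" and "x \<in> U"
  shows "(F has_derivative differential F x) (at x)"
proof -
  have "((\<lambda>s. F (y + s *\<^sub>R b)) has_real_derivative iter_pd [b] F y) (at 0)"
    if "b \<in> Basis" "y \<in> U" for b y
  proof -
    have "(\<lambda>s. iter_pd [] F (y + s *\<^sub>R b)) differentiable (at 0)"
      using F that unfolding smooth_on_def by (metis empty_subsetI list.set(1))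
    then show ?thesis
      using DERIV_deriv_iff_real_differentiable by simp
  qed
  moreover have "open U" using F by (simp add: smooth_on_def)
  ultimately show ?thesis
    unfolding differential_def[abs_def]
    using has_derivative_of_continuous_partials[OF _ \<open>x \<in> U\<close> _ smooth_on_continuous_partial[OF F]]
    by simp
qed

lemma continuous_on_differential:
  assumes "smooth_on U F" "continuous_on S x" "continuous_on S h" "x ` S \<subseteq> U"
  shows "continuous_on S (\<lambda>s. differential F (x s) (h s))"
  unfolding differential_def
  by (intro continuous_on_sum continuous_on_mult continuous_on_inner assms(3) continuous_on_const
      continuous_on_compose2[OF smooth_on_continuous_partial[OF assms(1)] assms(2) assms(4)])

lemma has_real_derivative_comp_curve:
  assumes "smooth_on U F" "c s \<in> U" "(c has_vector_derivative v) (at s within S)"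
  shows "((\<lambda>t. F (c t)) has_real_derivative differential F (c s) v) (at s within S)"
proof -
  have "((\<lambda>t. F (c t)) has_derivative (\<lambda>h. differential F (c s) (h *\<^sub>R v))) (at s within S)"
    using has_derivative_compose[OF assms(3)[unfolded has_vector_derivative_def]
        has_derivative_differential[OF assms(1,2)]] .
  moreover have "(\<lambda>h. differential F (c s) (h *\<^sub>R v)) = (*) (differential F (c s) v)"
    by (auto simp: differential_scaleR)
  ultimately show ?thesis
    by (simp add: has_field_derivative_def)
qed

definition bl_point :: "real \<Rightarrow> real \<Rightarrow> real \<Rightarrow> real \<Rightarrow> pt" where
  "bl_point t r \<theta> \<phi> = (t, r, sin \<theta> * cos \<phi>, sin \<theta> * sin \<phi>, cos \<theta>)"

lemma BL_eq_bl_point: "BL F t r \<theta> \<phi> = F (bl_point t r \<theta> \<phi>)"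
  by (simp add: BL_def bl_point_def)

lemma bl_point_periodic: "bl_point t r \<theta> (\<phi> + 2 * pi * of_int k) = bl_point t r \<theta> \<phi>"
  by (simp add: bl_point_def sin_add cos_add)

lemma bl_point_in_kerr_interior:
  assumes "r_minus M a < r" "r < r_plus M a"
  shows "bl_point t r \<theta> \<phi> \<in> kerr_interior M a"
proof -
  have "(sin \<theta> * cos \<phi>)\<^sup>2 + (sin \<theta> * sin \<phi>)\<^sup>2 = (sin \<theta>)\<^sup>2"
    by (simp add: power_mult_distrib flip: distrib_left)
  then show ?thesis
    using assms by (simp add: kerr_interior_def bl_point_def)
qed

definition bl_dt :: pt where "bl_dt = (1, 0, 0, 0, 0)"
definition bl_dr :: pt where "bl_dr = (0, 1, 0, 0, 0)"
definition bl_dphi :: "real \<Rightarrow> real \<Rightarrow> pt" where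
  "bl_dphi \<theta> \<phi> = (0, 0, - (sin \<theta> * sin \<phi>), sin \<theta> * cos \<phi>, 0)"

lemma bl_dphi_periodic: "bl_dphi \<theta> (\<phi> + 2 * pi * of_int k) = bl_dphi \<theta> \<phi>"
  by (simp add: bl_dphi_def sin_add cos_add)

lemma has_vector_derivative_bl_point_t: "((\<lambda>s. bl_point s r \<theta> \<phi>) has_vector_derivative bl_dt) (at t)"
  unfolding bl_point_def bl_dt_def
  by (intro has_vector_derivative_Pair has_vector_derivative_const has_vector_derivative_id)

lemma has_vector_derivative_bl_point_r: "((\<lambda>s. bl_point t s \<theta> \<phi>) has_vector_derivative bl_dr) (at r)"
  unfolding bl_point_def bl_dr_def
  by (intro has_vector_derivative_Pair has_vector_derivative_const has_vector_derivative_id)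

lemma has_vector_derivative_bl_point_phi:
  "((\<lambda>s. bl_point t r \<theta> s) has_vector_derivative bl_dphi \<theta> \<phi>) (at \<phi>)"
proof -
  have "((\<lambda>s. sin \<theta> * cos s) has_vector_derivative - (sin \<theta> * sin \<phi>)) (at \<phi>)"
    "((\<lambda>s. sin \<theta> * sin s) has_vector_derivative sin \<theta> * cos \<phi>) (at \<phi>)"
    unfolding has_real_derivative_iff_has_vector_derivative[symmetric]
    by (auto intro!: derivative_eq_intros)
  then show ?thesis
    unfolding bl_point_def bl_dphi_def
    by (intro has_vector_derivative_Pair has_vector_derivative_const)
qed

definition e3_differential :: "real \<Rightarrow> real \<Rightarrow> (pt \<Rightarrow> real) \<Rightarrow> real \<Rightarrow> real \<Rightarrow> real \<Rightarrow> real \<Rightarrow> real" where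
  "e3_differential M a F t r \<theta> \<phi> =
     Delta M a r / rho2 a r \<theta> * differential F (bl_point t r \<theta> \<phi>) bl_dr
     - 1 / rho2 a r \<theta> * ((r\<^sup>2 + a\<^sup>2) * differential F (bl_point t r \<theta> \<phi>) bl_dt
                         + a * differential F (bl_point t r \<theta> \<phi>) (bl_dphi \<theta> \<phi>))"

lemma e3_eq_e3_differential:
  assumes F: "smooth_on U F" and p: "bl_point t r \<theta> \<phi> \<in> U"
  shows "e3 M a F t r \<theta> \<phi> = e3_differential M a F t r \<theta> \<phi>"
proof -
  have "deriv (\<lambda>s. BL F s r \<theta> \<phi>) t = differential F (bl_point t r \<theta> \<phi>) bl_dt"
    "deriv (\<lambda>s. BL F t s \<theta> \<phi>) r = differential F (bl_point t r \<theta> \<phi>) bl_dr"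
    "deriv (\<lambda>s. BL F t r \<theta> s) \<phi> = differential F (bl_point t r \<theta> \<phi>) (bl_dphi \<theta> \<phi>)"
    unfolding BL_eq_bl_point using p
    by (auto intro!: DERIV_imp_deriv has_real_derivative_comp_curve[OF F] has_vector_derivative_bl_point_t
        has_vector_derivative_bl_point_r has_vector_derivative_bl_point_phi)
  then show ?thesis
    by (simp add: e3_def e3_differential_def)
qed

lemma continuous_on_Delta [continuous_intros]:
  "continuous_on S f \<Longrightarrow> continuous_on S (\<lambda>x. Delta M a (f x))"
  unfolding Delta_def by (intro continuous_intros)

lemma continuous_on_rho2 [continuous_intros]:
  fixes f g :: "'a::t2_space \<Rightarrow> real"
  shows "continuous_on S f \<Longrightarrow> continuous_on S g \<Longrightarrow> continuous_on S (\<lambda>x. rho2 a (f x) (g x))"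
  unfolding rho2_def by (intro continuous_intros)

locale kerr_subextremal =
  fixes M a :: real
  assumes M_pos: "M > 0" and a_nonzero: "0 < \<bar>a\<bar>" and a_less_M: "\<bar>a\<bar> < M"
begin

lemma sqrt_M2_minus_a2_bounds: "0 < sqrt (M\<^sup>2 - a\<^sup>2)" "sqrt (M\<^sup>2 - a\<^sup>2) < M"
proof -
  have "a\<^sup>2 < M\<^sup>2" using power_strict_mono[OF a_less_M abs_ge_zero, of 2] by simp
  then show "0 < sqrt (M\<^sup>2 - a\<^sup>2)" by simp
  have "sqrt (M\<^sup>2 - a\<^sup>2) < sqrt (M\<^sup>2)" using a_nonzero by (intro real_sqrt_less_mono) simp
  then show "sqrt (M\<^sup>2 - a\<^sup>2) < M" using M_pos by simp
qed

lemma r_minus_pos: "0 < r_minus M a"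
  and r_minus_less_M: "r_minus M a < M"
  and M_less_r_plus: "M < r_plus M a"
  using sqrt_M2_minus_a2_bounds by (simp_all add: r_minus_def r_plus_def)

lemma Delta_eq: "Delta M a r = (r - r_plus M a) * (r - r_minus M a)"
proof -
  have "(sqrt (M\<^sup>2 - a\<^sup>2))\<^sup>2 = M\<^sup>2 - a\<^sup>2" using sqrt_M2_minus_a2_bounds(1) by simp
  then show ?thesis
    unfolding Delta_def r_plus_def r_minus_def by (simp add: algebra_simps power2_eq_square)
qed

lemma Delta_neg: "r_minus M a < r \<Longrightarrow> r < r_plus M a \<Longrightarrow> Delta M a r < 0"
  by (simp add: Delta_eq mult_neg_pos)

lemma rho2_pos: "r_minus M a < r \<Longrightarrow> 0 < rho2 a r \<theta>"
  using r_minus_pos by (simp add: rho2_def add_pos_nonneg)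

text \<open>The angular analogue of the tortoise coordinate: eta is a primitive of a/Delta, just as
  r^* is one of (r^2 + a^2)/Delta, so e_3 is tangent to the curves
  r \<mapsto> (T - r^*(r), r, theta, P - eta(r)).\<close>
definition eta :: "real \<Rightarrow> real" where
  "eta r = a / (r_plus M a - r_minus M a) * (ln (r_plus M a - r) - ln (r - r_minus M a))"

lemma eta_has_derivative:
  assumes "r_minus M a < r" "r < r_plus M a"
  shows "(eta has_real_derivative a / Delta M a r) (at r)"
proof -
  define p m where "p = r_plus M a" and "m = r_minus M a"
  have "(eta has_real_derivative a / (p - m) * (- inverse (p - r) - inverse (r - m))) (at r)"
    unfolding eta_def[abs_def] p_def[symmetric] m_def[symmetric] using assms
    by (auto intro!: derivative_eq_intros simp: p_def m_def divide_inverse)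
  moreover have "a / (p - m) * (- inverse (p - r) - inverse (r - m)) = a / Delta M a r"
  proof -
    have "a / (x + y) * (- inverse y - inverse x) = a / (- y * x)" if "x > 0" "y > 0" for x y :: real
    proof -
      have cancel: "a / z * (- z / w) = - a / w" if "z \<noteq> 0" "w \<noteq> 0" for z w :: real
        using that by (simp add: field_simps)
      have "- inverse y - inverse x = - (x + y) / (x * y)" using that by (simp add: field_simps)
      moreover have "a / (x + y) * (- (x + y) / (x * y)) = - a / (x * y)"
        by (rule cancel) (use that in auto)
      ultimately show ?thesis by simp
    qed
    from this[of "r - m" "p - r"] assms show ?thesis
      by (simp add: Delta_eq p_def m_def)
  qed
  ultimately show ?thesis by simp
qed

lemma continuous_on_eta: "continuous_on {r_minus M a<..<r_plus M a} eta"
  unfolding eta_def[abs_def] by (intro continuous_intros) auto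

lemma borel_measurable_eta: "eta \<in> borel_measurable borel"
  unfolding eta_def[abs_def] by measurable

end

locale kerr_tortoise = kerr_subextremal +
  fixes rstar :: "real \<Rightarrow> real"
  assumes rstar_deriv: "\<And>r. r_minus M a < r \<Longrightarrow> r < r_plus M a \<Longrightarrow>
    (rstar has_real_derivative (r\<^sup>2 + a\<^sup>2) / Delta M a r) (at r)"
begin

definition e3_curve :: "real \<Rightarrow> real \<Rightarrow> real \<Rightarrow> real \<Rightarrow> pt" where
  "e3_curve T \<theta> P r = bl_point (T - rstar r) r \<theta> (P - eta r)"

definition e3_curve_velocity :: "real \<Rightarrow> real \<Rightarrow> real \<Rightarrow> pt" where
  "e3_curve_velocity \<theta> P r = (- ((r\<^sup>2 + a\<^sup>2) / Delta M a r), 1,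
      sin \<theta> * sin (P - eta r) * (a / Delta M a r), - (sin \<theta> * cos (P - eta r) * (a / Delta M a r)), 0)"

lemma e3_curve_velocity_eq:
  "e3_curve_velocity \<theta> P r = (- ((r\<^sup>2 + a\<^sup>2) / Delta M a r)) *\<^sub>R bl_dt + bl_dr
     + (- (a / Delta M a r)) *\<^sub>R bl_dphi \<theta> (P - eta r)"
  by (simp add: e3_curve_velocity_def bl_dt_def bl_dr_def bl_dphi_def)

lemma has_vector_derivative_e3_curve:
  assumes "r_minus M a < r" "r < r_plus M a"
  shows "(e3_curve T \<theta> P has_vector_derivative e3_curve_velocity \<theta> P r) (at r)"
proof -
  note rstar = rstar_deriv[OF assms] and eta = eta_has_derivative[OF assms]
  have "((\<lambda>r. T - rstar r) has_vector_derivative - ((r\<^sup>2 + a\<^sup>2) / Delta M a r)) (at r)"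
    "((\<lambda>r. sin \<theta> * cos (P - eta r)) has_vector_derivative
        sin \<theta> * sin (P - eta r) * (a / Delta M a r)) (at r)"
    "((\<lambda>r. sin \<theta> * sin (P - eta r)) has_vector_derivative
        - (sin \<theta> * cos (P - eta r) * (a / Delta M a r))) (at r)"
    unfolding has_real_derivative_iff_has_vector_derivative[symmetric]
    using rstar eta by (auto intro!: derivative_eq_intros)
  then show ?thesis
    unfolding e3_curve_def[abs_def] bl_point_def e3_curve_velocity_def
    by (intro has_vector_derivative_Pair has_vector_derivative_const has_vector_derivative_id)
qed

lemma e3_differential_along_e3_curve:
  assumes "r_minus M a < r" "r < r_plus M a"
  shows "e3_differential M a F (T - rstar r) r \<theta> (P - eta r)
    = Delta M a r / rho2 a r \<theta> * differential F (e3_curve T \<theta> P r) (e3_curve_velocity \<theta> P r)"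
proof -
  have "Delta M a r \<noteq> 0" "rho2 a r \<theta> \<noteq> 0"
    using Delta_neg[OF assms] rho2_pos[OF assms(1)] by (auto simp: less_le)
  then show ?thesis
    unfolding e3_curve_velocity_eq differential_add differential_scaleR e3_differential_def e3_curve_def
    by (simp add: field_simps)
qed

end

section \<open>Translations and shears of nonnegative integrals\<close>

abbreviation angle_window :: "real \<Rightarrow> ennreal" where
  "angle_window \<equiv> indicator {0<..<2*pi}"

lemma measurable_comp_continuous:
  assumes "Q \<in> borel_measurable borel" "continuous_on UNIV h"
  shows "(\<lambda>x. Q (h x)) \<in> borel_measurable borel"
  using measurable_compose[OF borel_measurable_continuous_onI[OF assms(2)] assms(1)] .

lemma borel_measurable_indicator_comp:
  assumes "f \<in> borel_measurable borel" "A \<in> sets borel"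
  shows "(\<lambda>p. indicator A (f p) :: ennreal) \<in> borel_measurable borel"
  using measurable_compose[OF assms(1) borel_measurable_indicator[OF assms(2)]] .

lemma nn_integral_lborel_shift:
  fixes f :: "real \<Rightarrow> ennreal"
  assumes "f \<in> borel_measurable borel"
  shows "(\<integral>\<^sup>+x. f x \<partial>lborel) = (\<integral>\<^sup>+x. f (c + x) \<partial>lborel)"
  using nn_integral_real_affine[of f 1 c] assms by simp

lemma nn_integral_periodic_window_base:
  fixes G :: "real \<Rightarrow> ennreal"
  assumes [measurable]: "G \<in> borel_measurable borel"
    and per: "\<And>x. G (x + 2*pi) = G x" and e: "0 \<le> e" "e < 2*pi"
  shows "(\<integral>\<^sup>+x. indicator {e<..<e+2*pi} x * G x \<partial>lborel) = (\<integral>\<^sup>+x. angle_window x * G x \<partial>lborel)"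
proof -
  \<comment> \<open>Cut the window at 2 pi and move the part beyond 2 pi back to [0, e).\<close>
  have "(\<integral>\<^sup>+x. indicator {e<..<e+2*pi} x * G x \<partial>lborel)
      = (\<integral>\<^sup>+x. indicator {e<..<2*pi} x * G x + indicator {2*pi..<e+2*pi} x * G x \<partial>lborel)"
    using e by (intro nn_integral_cong) (auto simp: indicator_def)
  also have "\<dots> = (\<integral>\<^sup>+x. indicator {e<..<2*pi} x * G x \<partial>lborel)
      + (\<integral>\<^sup>+x. indicator {2*pi..<e+2*pi} x * G x \<partial>lborel)"
    by (rule nn_integral_add) measurable
  also have "(\<integral>\<^sup>+x. indicator {2*pi..<e+2*pi} x * G x \<partial>lborel)
      = (\<integral>\<^sup>+x. indicator {2*pi..<e+2*pi} (2*pi + x) * G (2*pi + x) \<partial>lborel)"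
    by (rule nn_integral_lborel_shift) measurable
  also have "\<dots> = (\<integral>\<^sup>+x. indicator {0..<e} x * G x \<partial>lborel)"
    using per by (intro nn_integral_cong) (auto simp: indicator_def add.commute)
  also have "(\<integral>\<^sup>+x. indicator {e<..<2*pi} x * G x \<partial>lborel) + (\<integral>\<^sup>+x. indicator {0..<e} x * G x \<partial>lborel)
      = (\<integral>\<^sup>+x. indicator {e<..<2*pi} x * G x + indicator {0..<e} x * G x \<partial>lborel)"
    by (rule nn_integral_add[symmetric]) measurable
  also have "\<dots> = (\<integral>\<^sup>+x. angle_window x * G x \<partial>lborel)"
  proof (rule nn_integral_cong_AE)
    have "AE x in lborel. x \<noteq> e" "AE x in lborel. x \<noteq> (0::real)" by (rule AE_lborel_singleton)+
    then show "AE x in lborel. indicator {e<..<2*pi} x * G x + indicator {0..<e} x * G x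
        = angle_window x * G x"
      by eventually_elim (use e in \<open>auto simp: indicator_def\<close>)
  qed
  finally show ?thesis .
qed

lemma nn_integral_periodic_window:
  fixes G :: "real \<Rightarrow> ennreal"
  assumes [measurable]: "G \<in> borel_measurable borel"
    and per: "\<And>x k. G (x + 2*pi* of_int k) = G x"
  shows "(\<integral>\<^sup>+x. indicator {d<..<d+2*pi} x * G x \<partial>lborel) = (\<integral>\<^sup>+x. angle_window x * G x \<partial>lborel)"
proof -
  define k where "k = \<lfloor>d / (2*pi)\<rfloor>"
  define e where "e = d - 2*pi* of_int k"
  have "of_int k \<le> d/(2*pi)" "d/(2*pi) < of_int k + 1" unfolding k_def by linarith+
  then have e: "0 \<le> e" "e < 2*pi" unfolding e_def by (simp_all add: field_simps)
  have "(\<integral>\<^sup>+x. indicator {d<..<d+2*pi} x * G x \<partial>lborel)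
      = (\<integral>\<^sup>+x. indicator {d<..<d+2*pi} (2*pi* of_int k + x) * G (2*pi* of_int k + x) \<partial>lborel)"
    by (rule nn_integral_lborel_shift) measurable
  also have "\<dots> = (\<integral>\<^sup>+x. indicator {e<..<e+2*pi} x * G x \<partial>lborel)"
    using per by (intro nn_integral_cong) (auto simp: indicator_def e_def add.commute)
  also have "\<dots> = (\<integral>\<^sup>+x. angle_window x * G x \<partial>lborel)"
    using per[of _ 1] by (intro nn_integral_periodic_window_base e) simp_all
  finally show ?thesis .
qed

lemma nn_integral_periodic_translate:
  fixes G :: "real \<Rightarrow> ennreal"
  assumes [measurable]: "G \<in> borel_measurable borel"
    and per: "\<And>x k. G (x + 2*pi* of_int k) = G x"
  shows "(\<integral>\<^sup>+x. angle_window x * G (x - c) \<partial>lborel) = (\<integral>\<^sup>+x. angle_window x * G x \<partial>lborel)"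
proof -
  have "(\<integral>\<^sup>+x. angle_window x * G (x - c) \<partial>lborel)
      = (\<integral>\<^sup>+x. angle_window (c + x) * G (c + x - c) \<partial>lborel)"
    by (rule nn_integral_lborel_shift) measurable
  also have "\<dots> = (\<integral>\<^sup>+x. indicator {-c<..<-c+2*pi} x * G x \<partial>lborel)"
    by (intro nn_integral_cong) (auto simp: indicator_def)
  also have "\<dots> = (\<integral>\<^sup>+x. angle_window x * G x \<partial>lborel)"
    by (rule nn_integral_periodic_window[OF _ per]) simp
  finally show ?thesis .
qed

lemma nn_integral_lborel_prod:
  fixes f :: "('a::euclidean_space \<times> 'b::euclidean_space) \<Rightarrow> ennreal"
  assumes "f \<in> borel_measurable borel"
  shows "(\<integral>\<^sup>+p. f p \<partial>lborel) = (\<integral>\<^sup>+x. \<integral>\<^sup>+y. f (x,y) \<partial>lborel \<partial>lborel)"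
proof -
  have "f \<in> borel_measurable (lborel \<Otimes>\<^sub>M lborel)" using assms by (simp add: lborel_prod)
  from lborel.nn_integral_fst[OF this] show ?thesis by (simp add: lborel_prod)
qed

lemma nn_integral_lborel_swap:
  fixes f :: "'a::euclidean_space \<Rightarrow> 'b::euclidean_space \<Rightarrow> ennreal"
  assumes "case_prod f \<in> borel_measurable borel"
  shows "(\<integral>\<^sup>+x. \<integral>\<^sup>+y. f x y \<partial>lborel \<partial>lborel) = (\<integral>\<^sup>+y. \<integral>\<^sup>+x. f x y \<partial>lborel \<partial>lborel)"
proof -
  have "case_prod f \<in> borel_measurable (lborel \<Otimes>\<^sub>M lborel)" using assms by (simp add: lborel_prod)
  from lborel_pair.Fubini'[OF this] show ?thesis by simp
qed

lemma nn_integral_lborel_prod3: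
  fixes f :: "real \<times> real \<times> real \<Rightarrow> ennreal"
  assumes [measurable]: "f \<in> borel_measurable borel"
  shows "(\<integral>\<^sup>+p. f p \<partial>lborel) = (\<integral>\<^sup>+t. \<integral>\<^sup>+x. \<integral>\<^sup>+y. f (t,x,y) \<partial>lborel \<partial>lborel \<partial>lborel)"
proof -
  have "(\<integral>\<^sup>+p. f p \<partial>lborel) = (\<integral>\<^sup>+t. \<integral>\<^sup>+q. f (t,q) \<partial>lborel \<partial>lborel)"
    by (rule nn_integral_lborel_prod) measurable
  also have "\<dots> = (\<integral>\<^sup>+t. \<integral>\<^sup>+x. \<integral>\<^sup>+y. f (t,x,y) \<partial>lborel \<partial>lborel \<partial>lborel)"
    by (intro nn_integral_cong nn_integral_lborel_prod) measurable
  finally show ?thesis .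
qed

lemma nn_integral_translate_periodic:
  fixes Q :: "real \<times> real \<times> real \<Rightarrow> ennreal"
  assumes [measurable]: "Q \<in> borel_measurable borel"
    and per: "\<And>t x y k. Q (t, x, y + 2*pi * of_int k) = Q (t, x, y)"
  shows "(\<integral>\<^sup>+p. angle_window (snd (snd p)) * Q p \<partial>lborel)
       = (\<integral>\<^sup>+p. angle_window (snd (snd p)) * Q (fst p - c1, fst (snd p), snd (snd p) - c2) \<partial>lborel)"
proof -
  have [measurable]: "(\<lambda>p::real\<times>real\<times>real. angle_window (snd (snd p)) :: ennreal) \<in> borel_measurable borel"
    by (rule measurable_comp_continuous[OF borel_measurable_indicator]) (simp, intro continuous_intros)
  have [measurable]: "(\<lambda>p. Q (fst p - c1, fst (snd p), snd (snd p) - c2)) \<in> borel_measurable borel"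
    by (rule measurable_comp_continuous[OF assms(1)]) (intro continuous_intros)
  have "(\<integral>\<^sup>+p. angle_window (snd (snd p)) * Q (fst p - c1, fst (snd p), snd (snd p) - c2) \<partial>lborel)
     = (\<integral>\<^sup>+t. \<integral>\<^sup>+x. \<integral>\<^sup>+y. angle_window y * Q (t - c1, x, y - c2) \<partial>lborel \<partial>lborel \<partial>lborel)"
    by (subst nn_integral_lborel_prod3) simp_all
  also have "\<dots> = (\<integral>\<^sup>+t. \<integral>\<^sup>+x. \<integral>\<^sup>+y. angle_window y * Q (t - c1, x, y) \<partial>lborel \<partial>lborel \<partial>lborel)"
    by (intro nn_integral_cong nn_integral_periodic_translate) (measurable, rule per)
  also have "\<dots> = (\<integral>\<^sup>+t. \<integral>\<^sup>+x. \<integral>\<^sup>+y. angle_window y * Q (c1 + t - c1, x, y) \<partial>lborel \<partial>lborel \<partial>lborel)"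
    by (rule nn_integral_lborel_shift) measurable
  also have "\<dots> = (\<integral>\<^sup>+p. angle_window (snd (snd p)) * Q p \<partial>lborel)"
    by (subst nn_integral_lborel_prod3) simp_all
  finally show ?thesis ..
qed

lemma nn_integral_lborel4_r_inner:
  fixes f :: "real \<times> real \<times> real \<times> real \<Rightarrow> ennreal"
  assumes [measurable]: "f \<in> borel_measurable borel"
  shows "(\<integral>\<^sup>+p. f p \<partial>lborel) = (\<integral>\<^sup>+q. \<integral>\<^sup>+r. f (fst q, r, snd q) \<partial>lborel \<partial>lborel)"
proof -
  have "(\<integral>\<^sup>+p. f p \<partial>lborel) = (\<integral>\<^sup>+t. \<integral>\<^sup>+r. \<integral>\<^sup>+w. f (t,r,w) \<partial>lborel \<partial>lborel \<partial>lborel)"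
    by (subst nn_integral_lborel_prod, measurable, intro nn_integral_cong nn_integral_lborel_prod) measurable
  also have "\<dots> = (\<integral>\<^sup>+t. \<integral>\<^sup>+w. \<integral>\<^sup>+r. f (t,r,w) \<partial>lborel \<partial>lborel \<partial>lborel)"
    by (intro nn_integral_cong nn_integral_lborel_swap, unfold case_prod_beta',
        rule measurable_comp_continuous[OF assms], intro continuous_intros)
  also have "\<dots> = (\<integral>\<^sup>+q. \<integral>\<^sup>+r. f (fst q, r, snd q) \<partial>lborel \<partial>lborel)"
  proof -
    have "(\<lambda>x::(real\<times>real\<times>real)\<times>real. f (fst (fst x), snd x, snd (fst x))) \<in> borel_measurable borel"
      by (rule measurable_comp_continuous[OF assms]) (intro continuous_intros)
    then have "(\<lambda>x::(real\<times>real\<times>real)\<times>real. f (fst (fst x), snd x, snd (fst x)))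
        \<in> borel_measurable (lborel \<Otimes>\<^sub>M lborel)"
      by (simp add: lborel_prod)
    from lborel.borel_measurable_nn_integral_fst[OF this]
    have "(\<lambda>q::real\<times>real\<times>real. \<integral>\<^sup>+r. f (fst q, r, snd q) \<partial>lborel) \<in> borel_measurable borel"
      by simp
    then show ?thesis
      by (subst nn_integral_lborel_prod[where f="\<lambda>q. \<integral>\<^sup>+r. f (fst q, r, snd q) \<partial>lborel"]) auto
  qed
  finally show ?thesis .
qed

lemma nn_integral_lborel4_r_outer:
  fixes f :: "real \<times> real \<times> real \<times> real \<Rightarrow> ennreal"
  assumes "f \<in> borel_measurable borel"
  shows "(\<integral>\<^sup>+p. f p \<partial>lborel) = (\<integral>\<^sup>+r. \<integral>\<^sup>+q. f (fst q, r, snd q) \<partial>lborel \<partial>lborel)"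
  unfolding nn_integral_lborel4_r_inner[OF assms]
  by (rule nn_integral_lborel_swap[where f="\<lambda>q r. f (fst q, r, snd q)"])
     (unfold case_prod_beta', rule measurable_comp_continuous[OF assms], intro continuous_intros)

lemma borel_measurable_angle_window4:
  "(\<lambda>p::real\<times>real\<times>real\<times>real. angle_window (snd (snd (snd p)))) \<in> borel_measurable borel"
  by (rule measurable_comp_continuous[OF borel_measurable_indicator]) (simp, intro continuous_intros)

lemma borel_measurable_shear:
  fixes \<sigma> \<eta> :: "real \<Rightarrow> real"
  assumes "\<sigma> \<in> borel_measurable borel" "\<eta> \<in> borel_measurable borel"
  shows "(\<lambda>p::real\<times>real\<times>real\<times>real. (fst p - \<sigma> (fst (snd p)), fst (snd p), fst (snd (snd p)),
    snd (snd (snd p)) - \<eta> (fst (snd p)))) \<in> borel_measurable borel"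
proof -
  have "(\<lambda>p::real\<times>real\<times>real\<times>real. fst p) \<in> borel_measurable borel"
    "(\<lambda>p::real\<times>real\<times>real\<times>real. fst (snd p)) \<in> borel_measurable borel"
    "(\<lambda>p::real\<times>real\<times>real\<times>real. fst (snd (snd p))) \<in> borel_measurable borel"
    "(\<lambda>p::real\<times>real\<times>real\<times>real. snd (snd (snd p))) \<in> borel_measurable borel"
    by (intro borel_measurable_continuous_onI continuous_intros)+
  moreover have "(\<lambda>p::real\<times>real\<times>real\<times>real. \<sigma> (fst (snd p))) \<in> borel_measurable borel"
    "(\<lambda>p::real\<times>real\<times>real\<times>real. \<eta> (fst (snd p))) \<in> borel_measurable borel"
    by (rule measurable_comp_continuous, fact, intro continuous_intros)+
  ultimately show ?thesis
    by (intro borel_measurable_Pair borel_measurable_diff)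
qed

lemma nn_integral_shear:
  fixes Q :: "real \<times> real \<times> real \<times> real \<Rightarrow> ennreal" and \<sigma> \<eta> :: "real \<Rightarrow> real"
  assumes Q: "Q \<in> borel_measurable borel" and shear: "\<sigma> \<in> borel_measurable borel" "\<eta> \<in> borel_measurable borel"
    and per: "\<And>t r x y k. Q (t, r, x, y + 2*pi * of_int k) = Q (t, r, x, y)"
  shows "(\<integral>\<^sup>+p. angle_window (snd (snd (snd p))) * Q p \<partial>lborel)
    = (\<integral>\<^sup>+q. \<integral>\<^sup>+r. angle_window (snd (snd q)) * Q (fst q - \<sigma> r, r, fst (snd q), snd (snd q) - \<eta> r) \<partial>lborel \<partial>lborel)"
proof -
  have m: "(\<lambda>p. angle_window (snd (snd (snd p))) * Q p) \<in> borel_measurable borel"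
    by (intro borel_measurable_times_ennreal borel_measurable_angle_window4 Q)
  have m_shear: "(\<lambda>p. angle_window (snd (snd (snd p))) * Q (fst p - \<sigma> (fst (snd p)), fst (snd p),
      fst (snd (snd p)), snd (snd (snd p)) - \<eta> (fst (snd p)))) \<in> borel_measurable borel"
    by (intro borel_measurable_times_ennreal borel_measurable_angle_window4
        measurable_compose[OF borel_measurable_shear[OF shear] Q])
  have "(\<integral>\<^sup>+p. angle_window (snd (snd (snd p))) * Q p \<partial>lborel)
      = (\<integral>\<^sup>+r. \<integral>\<^sup>+q. angle_window (snd (snd q)) * Q (fst q, r, snd q) \<partial>lborel \<partial>lborel)"
    by (subst nn_integral_lborel4_r_outer[OF m]) simp
  also have "\<dots> = (\<integral>\<^sup>+r. \<integral>\<^sup>+q. angle_window (snd (snd q))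
      * Q (fst q - \<sigma> r, r, fst (snd q), snd (snd q) - \<eta> r) \<partial>lborel \<partial>lborel)"
  proof (rule nn_integral_cong)
    fix r
    have "(\<lambda>q. Q (fst q, r, snd q)) \<in> borel_measurable borel"
      by (rule measurable_comp_continuous[OF Q]) (intro continuous_intros)
    from nn_integral_translate_periodic[OF this, of "\<sigma> r" "\<eta> r"] per
    show "(\<integral>\<^sup>+q. angle_window (snd (snd q)) * Q (fst q, r, snd q) \<partial>lborel)
      = (\<integral>\<^sup>+q. angle_window (snd (snd q)) * Q (fst q - \<sigma> r, r, fst (snd q), snd (snd q) - \<eta> r) \<partial>lborel)"
      by simp
  qed
  also have "\<dots> = (\<integral>\<^sup>+p. angle_window (snd (snd (snd p))) * Q (fst p - \<sigma> (fst (snd p)), fst (snd p),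
      fst (snd (snd p)), snd (snd (snd p)) - \<eta> (fst (snd p))) \<partial>lborel)"
    by (subst nn_integral_lborel4_r_outer[OF m_shear]) simp
  also have "\<dots> = (\<integral>\<^sup>+q. \<integral>\<^sup>+r. angle_window (snd (snd q))
      * Q (fst q - \<sigma> r, r, fst (snd q), snd (snd q) - \<eta> r) \<partial>lborel \<partial>lborel)"
    by (subst nn_integral_lborel4_r_inner[OF m_shear]) simp
  finally show ?thesis .
qed

lemma borel_measurable_nn_integral_shear:
  fixes Q :: "real \<times> real \<times> real \<times> real \<Rightarrow> ennreal" and \<sigma> \<eta> :: "real \<Rightarrow> real"
  assumes Q: "Q \<in> borel_measurable borel" and shear: "\<sigma> \<in> borel_measurable borel" "\<eta> \<in> borel_measurable borel"
  shows "(\<lambda>q. \<integral>\<^sup>+r. angle_window (snd (snd q)) * Q (fst q - \<sigma> r, r, fst (snd q), snd (snd q) - \<eta> r) \<partial>lborel)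
    \<in> borel_measurable borel"
proof -
  have "(\<lambda>p. angle_window (snd (snd (snd p))) * Q (fst p - \<sigma> (fst (snd p)), fst (snd p),
      fst (snd (snd p)), snd (snd (snd p)) - \<eta> (fst (snd p)))) \<in> borel_measurable borel"
    by (intro borel_measurable_times_ennreal borel_measurable_angle_window4
        measurable_compose[OF borel_measurable_shear[OF shear] Q])
  from measurable_comp_continuous[OF this, of "\<lambda>x::(real\<times>real\<times>real)\<times>real. (fst (fst x), snd x, snd (fst x))"]
  have "(\<lambda>x::(real\<times>real\<times>real)\<times>real. angle_window (snd (snd (fst x)))
      * Q (fst (fst x) - \<sigma> (snd x), snd x, fst (snd (fst x)), snd (snd (fst x)) - \<eta> (snd x)))
      \<in> borel_measurable borel"
    by (simp add: continuous_intros)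
  then have "(\<lambda>x::(real\<times>real\<times>real)\<times>real. angle_window (snd (snd (fst x)))
      * Q (fst (fst x) - \<sigma> (snd x), snd x, fst (snd (fst x)), snd (snd (fst x)) - \<eta> (snd x)))
      \<in> borel_measurable (lborel \<Otimes>\<^sub>M lborel)"
    by (simp add: lborel_prod)
  from lborel.borel_measurable_nn_integral_fst[OF this] show ?thesis by simp
qed

section \<open>A weighted Hardy inequality\<close>

lemma hardy_pointwise_bound:
  fixes x G G' \<alpha> :: real
  assumes "x > 0" "\<alpha> < 1"
  shows "(1-\<alpha>)/2 * (G^2 * x powr (-\<alpha>)) - 2/(1-\<alpha>) * (G'^2 * x powr (2-\<alpha>))
    \<le> (1-\<alpha>) * x powr (-\<alpha>) * G^2 + x powr (1-\<alpha>) * (2 * G * G')"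
proof -
  \<comment> \<open>Young's inequality 2uv \<ge> -(e u^2 + v^2/e) with e = (1 - alpha)/2, u = p G, v = q G'.\<close>
  define e where "e = (1-\<alpha>)/2"
  define p where "p = x powr (-\<alpha>/2)"
  define q where "q = x powr (1-\<alpha>/2)"
  have pq: "p * q = x powr (1-\<alpha>)" "p^2 = x powr (-\<alpha>)" "q^2 = x powr (2-\<alpha>)"
    using assms by (simp_all add: p_def q_def powr_add[symmetric] power2_eq_square)
  have "e > 0" using assms by (simp add: e_def)
  then have "0 \<le> (e * (p * G) + q * G')^2 / e" by simp
  also have "\<dots> = e * p^2 * G^2 + 2 * (p * q) * G * G' + q^2 * G'^2 / e"
    using \<open>e > 0\<close> by (simp add: power2_eq_square field_simps)
  finally show ?thesis
    unfolding pq[symmetric] using assms by (simp add: e_def field_simps power2_eq_square)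
qed

lemma has_real_derivative_weighted_square:
  assumes "rm < r" "(g has_real_derivative g') (at r)"
  shows "((\<lambda>r. (r - rm) powr (1-\<alpha>) * g r^2) has_real_derivative
    (1-\<alpha>) * (r - rm) powr (-\<alpha>) * g r^2 + (r - rm) powr (1-\<alpha>) * (2 * g r * g')) (at r)"
proof -
  have "((\<lambda>r. (r - rm) powr (1-\<alpha>)) has_real_derivative (1-\<alpha>) * (r - rm) powr (1-\<alpha>-1)) (at r)"
    using has_real_derivative_powr[of "r - rm" "1-\<alpha>"] assms(1)
      DERIV_shift[of "\<lambda>x. x powr (1-\<alpha>)" "(1-\<alpha>) * (r-rm) powr (1-\<alpha>-1)" r "-rm"]
    by simp
  moreover have "((\<lambda>r. g r^2) has_real_derivative 2 * g r * g') (at r)"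
    using DERIV_power[OF assms(2), of 2] by (simp add: mult_ac)
  ultimately show ?thesis
    using DERIV_mult by (fastforce simp: algebra_simps)
qed

lemma hardy_integral_interval:
  fixes g g' :: "real \<Rightarrow> real"
  assumes rc: "rm < c" "c \<le> rt" and al: "0 \<le> \<alpha>" "\<alpha> < 1"
    and gd: "\<And>r. c \<le> r \<Longrightarrow> r \<le> rt \<Longrightarrow> (g has_real_derivative g' r) (at r)"
    and gc: "continuous_on {c..rt} g'"
  shows "integral {c..rt} (\<lambda>r. g r^2 * (r-rm) powr (-\<alpha>))
     \<le> 2*(rt-rm) powr (1-\<alpha>)/(1-\<alpha>) * g rt^2
       + 4/(1-\<alpha>)^2 * integral {c..rt} (\<lambda>r. g' r^2 * (r-rm) powr (2-\<alpha>))"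
proof -
  define A where "A r = g r^2 * (r-rm) powr (-\<alpha>)" for r
  define B where "B r = g' r^2 * (r-rm) powr (2-\<alpha>)" for r
  define W where "W r = (r-rm) powr (1-\<alpha>) * g r^2" for r
  define W' where "W' r = (1-\<alpha>) * (r-rm) powr (-\<alpha>) * g r^2 + (r-rm) powr (1-\<alpha>) * (2 * g r * g' r)" for r
  have gcont: "continuous_on {c..rt} g"
    using gd by (meson DERIV_atLeastAtMost_imp_continuous_on)
  have pc: "continuous_on {c..rt} (\<lambda>r. (r - rm) powr p)" for p
    using rc by (intro continuous_intros) auto
  have Acont: "continuous_on {c..rt} A" and Bcont: "continuous_on {c..rt} B"
    unfolding A_def B_def by (intro continuous_intros gcont gc pc)+
  have Wder: "(W has_real_derivative W' r) (at r)" if "c \<le> r" "r \<le> rt" for r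
    unfolding W_def[abs_def] W'_def using rc that by (intro has_real_derivative_weighted_square gd) auto
  have FTC: "(W' has_integral (W rt - W c)) {c..rt}"
    using rc by (intro fundamental_theorem_of_calculus)
      (auto intro!: has_real_derivative_iff_has_vector_derivative[THEN iffD1, THEN has_vector_derivative_at_within] Wder)
  have pointwise: "(1-\<alpha>)/2 * A r - 2/(1-\<alpha>) * B r \<le> W' r" if "r \<in> {c..rt}" for r
    unfolding A_def B_def W'_def using that rc al by (intro hardy_pointwise_bound) auto
  have intA: "A integrable_on {c..rt}" and intB: "B integrable_on {c..rt}"
    using Acont Bcont by (simp_all add: integrable_continuous_interval)
  have "(1-\<alpha>)/2 * integral {c..rt} A - 2/(1-\<alpha>) * integral {c..rt} B
      = integral {c..rt} (\<lambda>r. (1-\<alpha>)/2 * A r - 2/(1-\<alpha>) * B r)"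
    by (simp only: integral_diff[OF integrable_on_mult_right[OF intA] integrable_on_mult_right[OF intB]]
        integral_mult_right)
  also have "\<dots> \<le> integral {c..rt} W'"
    using pointwise FTC Acont Bcont al
    by (intro integral_le) (auto intro!: integrable_continuous_interval continuous_intros
        simp: has_integral_integrable_integral)
  also have "\<dots> = W rt - W c" using FTC by (simp add: integral_unique)
  also have "\<dots> \<le> W rt" by (simp add: W_def)
  finally have "(1-\<alpha>)/2 * integral {c..rt} A \<le> W rt + 2/(1-\<alpha>) * integral {c..rt} B"
    by simp
  from mult_left_mono[OF this, of "2/(1-\<alpha>)"] al
  have "integral {c..rt} A \<le> 2/(1-\<alpha>) * W rt + 4/(1-\<alpha>)^2 * integral {c..rt} B"
    by (simp add: power2_eq_square distrib_left)
  then show ?thesis unfolding A_def[abs_def] B_def[abs_def] W_def by (simp add: mult.assoc)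
qed

lemma borel_measurable_continuous_on_indicator_ennreal:
  fixes f :: "real \<Rightarrow> real"
  assumes "I \<in> sets borel" "continuous_on I f"
  shows "(\<lambda>x. ennreal (f x) * indicator I x) \<in> borel_measurable borel"
proof -
  have "(\<lambda>x. ennreal (indicator I x *\<^sub>R f x)) \<in> borel_measurable borel"
    using borel_measurable_continuous_on_indicator[OF assms] by measurable
  moreover have "(\<lambda>x. ennreal (indicator I x *\<^sub>R f x)) = (\<lambda>x. ennreal (f x) * indicator I x)"
    by (auto simp: indicator_def)
  ultimately show ?thesis by simp
qed

lemma hardy_nn_integral_interval:
  fixes g g' :: "real \<Rightarrow> real"
  assumes rc: "rm < c" "c \<le> rt" and al: "0 \<le> \<alpha>" "\<alpha> < 1"
    and gd: "\<And>r. c \<le> r \<Longrightarrow> r \<le> rt \<Longrightarrow> (g has_real_derivative g' r) (at r)"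
    and gc: "continuous_on {c..rt} g'"
  shows "(\<integral>\<^sup>+r. ennreal (g r^2 * (r-rm) powr (-\<alpha>)) * indicator {c..rt} r \<partial>lborel)
     \<le> ennreal (2*(rt-rm) powr (1-\<alpha>)/(1-\<alpha>) * g rt^2) + ennreal (4/(1-\<alpha>)^2) *
        (\<integral>\<^sup>+r. ennreal (g' r^2 * (r-rm) powr (2-\<alpha>)) * indicator {c..rt} r \<partial>lborel)"
proof -
  have gcont: "continuous_on {c..rt} g"
    using gd by (meson DERIV_atLeastAtMost_imp_continuous_on)
  have pc: "continuous_on {c..rt} (\<lambda>r. (r - rm) powr p)" for p
    using rc by (intro continuous_intros) auto
  have "(\<integral>\<^sup>+r. ennreal (g r^2 * (r-rm) powr (-\<alpha>)) * indicator {c..rt} r \<partial>lborel)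
      = ennreal (integral {c..rt} (\<lambda>r. g r^2 * (r-rm) powr (-\<alpha>)))"
    by (intro nn_integral_has_integral_lebesgue' integrable_integral integrable_continuous_interval
        continuous_intros gcont pc) simp
  moreover have "(\<integral>\<^sup>+r. ennreal (g' r^2 * (r-rm) powr (2-\<alpha>)) * indicator {c..rt} r \<partial>lborel)
      = ennreal (integral {c..rt} (\<lambda>r. g' r^2 * (r-rm) powr (2-\<alpha>)))"
    by (intro nn_integral_has_integral_lebesgue' integrable_integral integrable_continuous_interval
        continuous_intros gc pc) simp
  moreover have "integral {c..rt} (\<lambda>r. g' r^2 * (r-rm) powr (2-\<alpha>)) \<ge> 0"
    by (intro integral_nonneg integrable_continuous_interval continuous_intros gc pc) simp
  moreover have "2*(rt-rm) powr (1-\<alpha>)/(1-\<alpha>) * g rt^2 \<ge> 0" using al by simp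
  ultimately show ?thesis
    using hardy_integral_interval[OF rc al gd gc] al
    by (simp add: ennreal_plus[symmetric] ennreal_mult[symmetric] ennreal_leI del: ennreal_plus)
qed

lemma sublevel_set_Int_atLeast:
  fixes \<psi> :: "real \<Rightarrow> real"
  assumes "rm < c" "\<psi> rt \<le> K"
    and \<psi>d: "\<And>r. rm < r \<Longrightarrow> r \<le> rt \<Longrightarrow> \<exists>y. (\<psi> has_real_derivative y) (at r) \<and> y < 0"
  shows "\<exists>c'>rm. {r. rm < r \<and> r \<le> rt \<and> \<psi> r \<le> K} \<inter> {c..} = {c'..rt}"
proof (cases "c \<le> rt")
  case False
  then show ?thesis using \<open>rm < c\<close> by (intro exI[of _ c]) auto
next
  case True
  have dec: "\<psi> y < \<psi> x" if "c \<le> x" "x < y" "y \<le> rt" for x y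
    using DERIV_neg_imp_decreasing[of x y \<psi>] \<psi>d that \<open>rm < c\<close> by force
  have "\<exists>c'\<ge>c. \<forall>r. c \<le> r \<longrightarrow> r \<le> rt \<longrightarrow> (\<psi> r \<le> K \<longleftrightarrow> c' \<le> r)"
  proof (cases "\<psi> c \<le> K")
    case True
    have "\<psi> r \<le> K" if "c \<le> r" "r \<le> rt" for r
      using dec[of c r] that True by (cases "c = r") auto
    then show ?thesis by (intro exI[of _ c]) auto
  next
    case False
    have "continuous_on {c..rt} \<psi>"
      using \<psi>d \<open>rm < c\<close> by (intro DERIV_atLeastAtMost_imp_continuous_on) (meson less_le_trans)
    then obtain x where x: "c \<le> x" "x \<le> rt" "\<psi> x = K"
      using IVT2'[of \<psi> rt K c] \<open>c \<le> rt\<close> assms(2) False by auto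
    have "\<psi> r \<le> K \<longleftrightarrow> x \<le> r" if "c \<le> r" "r \<le> rt" for r
      using dec[of r x] dec[of x r] that x by (cases r x rule: linorder_cases) auto
    then show ?thesis using x by (intro exI[of _ x]) auto
  qed
  then obtain c' where "c \<le> c'" and c': "\<And>r. c \<le> r \<Longrightarrow> r \<le> rt \<Longrightarrow> \<psi> r \<le> K \<longleftrightarrow> c' \<le> r"
    by blast
  then have "{r. rm < r \<and> r \<le> rt \<and> \<psi> r \<le> K} \<inter> {c..} = {c'..rt}"
    using \<open>rm < c\<close> by auto
  then show ?thesis using \<open>rm < c\<close> \<open>c \<le> c'\<close> by auto
qed

lemma nn_integral_le_of_truncations:
  fixes f :: "real \<Rightarrow> ennreal"
  assumes S: "S \<subseteq> {rm<..}"
    and meas: "\<And>c. rm < c \<Longrightarrow> (\<lambda>r. f r * indicator (S \<inter> {c..}) r) \<in> borel_measurable lborel"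
    and bound: "\<And>c. rm < c \<Longrightarrow> (\<integral>\<^sup>+r. f r * indicator (S \<inter> {c..}) r \<partial>lborel) \<le> B"
  shows "(\<integral>\<^sup>+r. f r * indicator S r \<partial>lborel) \<le> B"
proof -
  define c where "c n = rm + 1 / Suc n" for n
  have c_gt: "rm < c n" for n by (simp add: c_def)
  have "incseq (\<lambda>n r. f r * indicator (S \<inter> {c n..}) r)"
    by (intro incseq_SucI le_funI mult_left_mono indicator_leI)
      (auto simp: c_def frac_le order_trans[rotated])
  then have "(\<integral>\<^sup>+r. (SUP n. f r * indicator (S \<inter> {c n..}) r) \<partial>lborel)
      = (SUP n. \<integral>\<^sup>+r. f r * indicator (S \<inter> {c n..}) r \<partial>lborel)"
    using meas[OF c_gt] by (rule nn_integral_monotone_convergence_SUP)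
  moreover have "(SUP n. f r * indicator (S \<inter> {c n..}) r) = f r * indicator S r" for r
  proof (cases "r \<in> S")
    case True
    then obtain n where "1 / Suc n < r - rm"
      using S reals_Archimedean[of "r - rm"] by (auto simp: inverse_eq_divide)
    then have "f r * indicator S r \<le> (SUP n. f r * indicator (S \<inter> {c n..}) r)"
      using True by (intro SUP_upper2[of n]) (auto simp: c_def)
    then show ?thesis
      by (intro antisym SUP_least mult_left_mono indicator_leI) auto
  qed simp
  ultimately show ?thesis
    using bound[OF c_gt] by (simp add: SUP_least)
qed

lemma hardy_nn_integral_sublevel:
  fixes g g' \<psi> :: "real \<Rightarrow> real" and rm rt K \<alpha> :: real
  defines "S \<equiv> {r. rm < r \<and> r \<le> rt \<and> \<psi> r \<le> K}"
  assumes al: "0 \<le> \<alpha>" "\<alpha> < 1"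
    and gd: "\<And>r. rm < r \<Longrightarrow> r \<le> rt \<Longrightarrow> (g has_real_derivative g' r) (at r)"
    and gc: "continuous_on {rm<..rt} g'"
    and \<psi>d: "\<And>r. rm < r \<Longrightarrow> r \<le> rt \<Longrightarrow> \<exists>y. (\<psi> has_real_derivative y) (at r) \<and> y < 0"
  shows "(\<integral>\<^sup>+r. ennreal (g r^2 * (r-rm) powr (-\<alpha>)) * indicator S r \<partial>lborel)
   \<le> ennreal (2*(rt-rm) powr (1-\<alpha>)/(1-\<alpha>) * g rt^2) * indicator S rt
     + ennreal (4/(1-\<alpha>)^2) * (\<integral>\<^sup>+r. ennreal (g' r^2 * (r-rm) powr (2-\<alpha>)) * indicator S r \<partial>lborel)"
    (is "?L \<le> ?R")
proof -
  have dec: "\<psi> y < \<psi> x" if "rm < x" "x < y" "y \<le> rt" for x y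
    using DERIV_neg_imp_decreasing[of x y \<psi>] \<psi>d that by force
  show ?thesis
  proof (cases "rt \<in> S")
    case False
    have "r \<notin> S" for r
      using dec[of r rt] False by (cases "r = rt") (auto simp: S_def)
    then have "S = {}" by blast
    then show ?thesis by simp
  next
    case True
    have trunc: "\<exists>c'>rm. S \<inter> {c..} = {c'..rt}" if "rm < c" for c
      unfolding S_def using sublevel_set_Int_atLeast[OF that _ \<psi>d] \<open>rt \<in> S\<close> by (simp add: S_def)
    \<comment> \<open>Away from rm the set S is an interval ending at rt, where the interval version applies.\<close>
    show ?thesis
    proof (rule nn_integral_le_of_truncations)
      show "S \<subseteq> {rm<..}" by (auto simp: S_def)
      fix c assume "rm < c"
      then obtain c' where "rm < c'" and c': "S \<inter> {c..} = {c'..rt}" using trunc by blast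
      have "continuous_on {c'..rt} g"
        using gd \<open>rm < c'\<close> by (intro DERIV_atLeastAtMost_imp_continuous_on) (meson less_le_trans)
      then have "continuous_on {c'..rt} (\<lambda>r. g r^2 * (r-rm) powr (-\<alpha>))"
        using \<open>rm < c'\<close> by (intro continuous_intros) auto
      then show "(\<lambda>r. ennreal (g r^2 * (r-rm) powr (-\<alpha>)) * indicator (S \<inter> {c..}) r) \<in> borel_measurable lborel"
        unfolding c' measurable_lborel2 by (intro borel_measurable_continuous_on_indicator_ennreal) auto
      show "(\<integral>\<^sup>+r. ennreal (g r^2 * (r-rm) powr (-\<alpha>)) * indicator (S \<inter> {c..}) r \<partial>lborel) \<le> ?R"
      proof (cases "c' \<le> rt")
        case True
        have "continuous_on {c'..rt} g'"
          using \<open>rm < c'\<close> by (intro continuous_on_subset[OF gc]) auto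
        from hardy_nn_integral_interval[OF \<open>rm < c'\<close> True al _ this] gd \<open>rm < c'\<close>
        have "(\<integral>\<^sup>+r. ennreal (g r^2 * (r-rm) powr (-\<alpha>)) * indicator {c'..rt} r \<partial>lborel)
          \<le> ennreal (2*(rt-rm) powr (1-\<alpha>)/(1-\<alpha>) * g rt^2) + ennreal (4/(1-\<alpha>)^2) *
            (\<integral>\<^sup>+r. ennreal (g' r^2 * (r-rm) powr (2-\<alpha>)) * indicator {c'..rt} r \<partial>lborel)"
          by simp
        also have "\<dots> \<le> ?R"
          using \<open>rt \<in> S\<close> c'
          by (intro add_mono mult_left_mono nn_integral_mono indicator_leI) auto
        finally show ?thesis unfolding c' .
      qed (use c' in simp)
    qed
  qed
qed

lemma sublevel_set_is_interval:
  fixes \<psi> :: "real \<Rightarrow> real"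
  assumes "\<And>x y. rm < x \<Longrightarrow> x < y \<Longrightarrow> y \<le> rt \<Longrightarrow> \<psi> y < \<psi> x"
  shows "is_interval {r. rm < r \<and> r \<le> rt \<and> \<psi> r \<le> K}"
  unfolding is_interval_1 using assms by (force simp: le_less)

lemma borel_measurable_weight_on_sublevel:
  fixes f \<psi> :: "real \<Rightarrow> real"
  assumes f: "continuous_on {rm<..rt} f"
    and \<psi>d: "\<And>r. rm < r \<Longrightarrow> r \<le> rt \<Longrightarrow> \<exists>y. (\<psi> has_real_derivative y) (at r) \<and> y < 0"
  shows "(\<lambda>r. ennreal ((f r)\<^sup>2 * (r - rm) powr p) * indicator {r. rm < r \<and> r \<le> rt \<and> \<psi> r \<le> K} r)
    \<in> borel_measurable lborel"
proof -
  have "\<psi> y < \<psi> x" if "rm < x" "x < y" "y \<le> rt" for x y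
    using DERIV_neg_imp_decreasing[of x y \<psi>] \<psi>d that by force
  then have "{r. rm < r \<and> r \<le> rt \<and> \<psi> r \<le> K} \<in> sets borel"
    by (intro real_interval_borel_measurable sublevel_set_is_interval)
  moreover have "continuous_on {r. rm < r \<and> r \<le> rt \<and> \<psi> r \<le> K} (\<lambda>r. (f r)\<^sup>2 * (r - rm) powr p)"
    by (intro continuous_intros continuous_on_subset[OF f]) auto
  ultimately show ?thesis
    unfolding measurable_lborel2 by (rule borel_measurable_continuous_on_indicator_ennreal)
qed

lemma nn_integral_indicator_le_cmult:
  fixes f h :: "real \<Rightarrow> real"
  assumes "0 \<le> c" "\<And>r. r \<in> S \<Longrightarrow> f r \<le> c * h r"
    and "(\<lambda>r. ennreal (h r) * indicator S r) \<in> borel_measurable lborel"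
  shows "(\<integral>\<^sup>+r. ennreal (f r) * indicator S r \<partial>lborel) \<le> ennreal c * (\<integral>\<^sup>+r. ennreal (h r) * indicator S r \<partial>lborel)"
proof -
  have "(\<integral>\<^sup>+r. ennreal (f r) * indicator S r \<partial>lborel) \<le> (\<integral>\<^sup>+r. ennreal c * (ennreal (h r) * indicator S r) \<partial>lborel)"
    using assms(1,2) by (intro nn_integral_mono) (auto simp: ennreal_mult'[symmetric] ennreal_leI split: split_indicator)
  also have "\<dots> = ennreal c * (\<integral>\<^sup>+r. ennreal (h r) * indicator S r \<partial>lborel)"
    by (rule nn_integral_cmult[OF assms(3)])
  finally show ?thesis .
qed

text \<open>With x = r - r_-, y = r_+ - r (so x y = -Delta) and d = r_+ - rt \<le> y, these compare the
  weights of the theorem with those of the Hardy inequality.\<close>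
lemma phi_weight_le:
  fixes x y d \<alpha> G \<rho> K s :: real
  assumes "x > 0" "d > 0" "d \<le> y" "0 \<le> \<alpha>" "0 < \<rho>" "\<rho> \<le> K" "0 \<le> s"
  shows "G\<^sup>2 / (x*y) powr \<alpha> * \<rho> * s \<le> (d powr (-\<alpha>) * K * s) * (G\<^sup>2 * x powr (-\<alpha>))"
proof -
  have "G\<^sup>2 / (x*y) powr \<alpha> = G\<^sup>2 * x powr (-\<alpha>) * y powr (-\<alpha>)"
    using assms by (simp add: powr_mult powr_minus divide_inverse)
  moreover have "y powr (-\<alpha>) \<le> d powr (-\<alpha>)" using assms by (intro powr_mono2') auto
  then have "G\<^sup>2 * x powr (-\<alpha>) * y powr (-\<alpha>) * \<rho> * s \<le> G\<^sup>2 * x powr (-\<alpha>) * d powr (-\<alpha>) * K * s"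
    using assms by (intro mult_right_mono mult_mono mult_left_mono) auto
  ultimately show ?thesis by (simp add: mult_ac)
qed

lemma e3_weight_ge:
  fixes x y d \<alpha> G \<rho> K s :: real
  assumes "x > 0" "d > 0" "d \<le> y" "0 \<le> \<alpha>" "\<alpha> < 1" "0 < \<rho>" "\<rho> \<le> K" "0 \<le> s"
  shows "(d powr (2-\<alpha>) / K * s) * (G\<^sup>2 * x powr (2-\<alpha>)) \<le> ((-(x*y)) / \<rho> * G)\<^sup>2 / (x*y) powr \<alpha> * \<rho> * s"
proof -
  have xy: "x * y > 0" using assms by simp
  have "((-(x*y)) / \<rho> * G)\<^sup>2 / (x*y) powr \<alpha> * \<rho> * s = ((x*y) powr 2 / (x*y) powr \<alpha>) * G\<^sup>2 * s / \<rho>"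
    using assms xy by (simp add: power_mult_distrib power_divide powr_numeral[symmetric] field_simps power2_eq_square)
  also have "(x*y) powr 2 / (x*y) powr \<alpha> = x powr (2-\<alpha>) * y powr (2-\<alpha>)"
    using xy assms by (simp add: powr_diff powr_mult)
  finally have e: "((-(x*y)) / \<rho> * G)\<^sup>2 / (x*y) powr \<alpha> * \<rho> * s = x powr (2-\<alpha>) * y powr (2-\<alpha>) * G\<^sup>2 * s / \<rho>" .
  have "d powr (2-\<alpha>) \<le> y powr (2-\<alpha>)" using assms by (intro powr_mono2) auto
  moreover have "1 / K \<le> 1 / \<rho>" using assms by (intro divide_left_mono) auto
  ultimately have "d powr (2-\<alpha>) * (1/K) * (x powr (2-\<alpha>) * G\<^sup>2 * s) \<le> y powr (2-\<alpha>) * (1/\<rho>) * (x powr (2-\<alpha>) * G\<^sup>2 * s)"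
    using assms by (intro mult_right_mono mult_mono) auto
  then show ?thesis unfolding e by (simp add: field_simps)
qed

context kerr_subextremal
begin

lemma neg_Delta_eq: "- Delta M a r = (r - r_minus M a) * (r_plus M a - r)"
  by (simp add: Delta_eq algebra_simps)

lemma rho2_le:
  assumes "r_minus M a < r" "r \<le> rt"
  shows "rho2 a r \<theta> \<le> rt\<^sup>2 + a\<^sup>2"
proof -
  have "r\<^sup>2 \<le> rt\<^sup>2" using assms r_minus_pos by (intro power_mono) auto
  moreover have "a\<^sup>2 * (cos \<theta>)\<^sup>2 \<le> a\<^sup>2" by (simp add: mult_left_le abs_square_le_1)
  ultimately show ?thesis by (simp add: rho2_def)
qed

definition phi_weight_const :: "real \<Rightarrow> real \<Rightarrow> real" where
  "phi_weight_const rt \<alpha> = (r_plus M a - rt) powr (-\<alpha>) * (rt\<^sup>2 + a\<^sup>2)"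

definition e3_weight_const :: "real \<Rightarrow> real \<Rightarrow> real" where
  "e3_weight_const rt \<alpha> = (r_plus M a - rt) powr (2-\<alpha>) / (rt\<^sup>2 + a\<^sup>2)"

definition hardy_const :: "real \<Rightarrow> real \<Rightarrow> real" where
  "hardy_const rt \<alpha> = phi_weight_const rt \<alpha> * (2 * (rt - r_minus M a) powr (1-\<alpha>) / (1-\<alpha>)) / rt\<^sup>2
     + phi_weight_const rt \<alpha> * (4 / (1-\<alpha>)\<^sup>2) / e3_weight_const rt \<alpha>"

lemma weight_consts_pos:
  assumes "r_minus M a < rt" "rt < r_plus M a"
  shows "0 < phi_weight_const rt \<alpha>" "0 < e3_weight_const rt \<alpha>"
proof -
  have "0 < rt\<^sup>2 + a\<^sup>2" using assms(1) r_minus_pos by (simp add: add_pos_nonneg)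
  then show "0 < phi_weight_const rt \<alpha>" "0 < e3_weight_const rt \<alpha>"
    using assms(2) by (simp_all add: phi_weight_const_def e3_weight_const_def)
qed

lemma hardy_const_pos:
  assumes "r_minus M a < rt" "rt < r_plus M a" "\<alpha> < 1"
  shows "0 < hardy_const rt \<alpha>"
  using weight_consts_pos[OF assms(1,2)] assms r_minus_pos
  unfolding hardy_const_def by (intro add_pos_pos divide_pos_pos mult_pos_pos) auto

lemma hardy_const_dominates:
  assumes "r_minus M a < rt" "rt < r_plus M a" "\<alpha> < 1"
  shows "phi_weight_const rt \<alpha> * (2 * (rt - r_minus M a) powr (1-\<alpha>) / (1-\<alpha>)) \<le> hardy_const rt \<alpha> * rt\<^sup>2"
    and "phi_weight_const rt \<alpha> * (4 / (1-\<alpha>)\<^sup>2) \<le> hardy_const rt \<alpha> * e3_weight_const rt \<alpha>"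
proof -
  define cL cR Ka Kb where "cL = phi_weight_const rt \<alpha>" and "cR = e3_weight_const rt \<alpha>"
    and "Ka = 2 * (rt - r_minus M a) powr (1-\<alpha>) / (1-\<alpha>)" and "Kb = 4 / (1-\<alpha>)\<^sup>2"
  have pos: "0 < cL" "0 < cR" "0 \<le> Ka" "0 \<le> Kb" "0 < rt"
    using weight_consts_pos[OF assms(1,2)] assms r_minus_pos by (auto simp: cL_def cR_def Ka_def Kb_def)
  have C: "hardy_const rt \<alpha> = cL * Ka / rt\<^sup>2 + cL * Kb / cR"
    by (simp add: hardy_const_def cL_def cR_def Ka_def Kb_def)
  show "cL * Ka \<le> hardy_const rt \<alpha> * rt\<^sup>2" and "cL * Kb \<le> hardy_const rt \<alpha> * cR"
    unfolding C using pos by (simp_all add: distrib_right)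
qed

lemma nn_integral_phi_weight_le:
  assumes rt: "r_minus M a < rt" "rt < r_plus M a" and "0 \<le> \<alpha>" "0 \<le> sin \<theta>"
    and S: "S \<subseteq> {r_minus M a<..rt}"
    and meas: "(\<lambda>r. ennreal ((g r)\<^sup>2 * (r - r_minus M a) powr (-\<alpha>)) * indicator S r) \<in> borel_measurable lborel"
  shows "(\<integral>\<^sup>+r. ennreal ((g r)\<^sup>2 / (- Delta M a r) powr \<alpha> * rho2 a r \<theta> * sin \<theta>) * indicator S r \<partial>lborel)
    \<le> ennreal (phi_weight_const rt \<alpha> * sin \<theta>)
      * (\<integral>\<^sup>+r. ennreal ((g r)\<^sup>2 * (r - r_minus M a) powr (-\<alpha>)) * indicator S r \<partial>lborel)"
proof (rule nn_integral_indicator_le_cmult[OF _ _ meas])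
  show "0 \<le> phi_weight_const rt \<alpha> * sin \<theta>"
    using weight_consts_pos(1)[OF rt, of \<alpha>] \<open>0 \<le> sin \<theta>\<close> by simp
  fix r assume "r \<in> S"
  then have r: "r_minus M a < r" "r \<le> rt" using S by auto
  have "(g r)\<^sup>2 / ((r - r_minus M a) * (r_plus M a - r)) powr \<alpha> * rho2 a r \<theta> * sin \<theta>
    \<le> ((r_plus M a - rt) powr (-\<alpha>) * (rt\<^sup>2 + a\<^sup>2) * sin \<theta>) * ((g r)\<^sup>2 * (r - r_minus M a) powr (-\<alpha>))"
    using r rt rho2_pos[OF r(1)] rho2_le[OF r] assms(3,4) by (intro phi_weight_le) auto
  then show "(g r)\<^sup>2 / (- Delta M a r) powr \<alpha> * rho2 a r \<theta> * sin \<theta>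
    \<le> phi_weight_const rt \<alpha> * sin \<theta> * ((g r)\<^sup>2 * (r - r_minus M a) powr (-\<alpha>))"
    by (simp only: neg_Delta_eq phi_weight_const_def)
qed

lemma nn_integral_e3_weight_ge:
  assumes rt: "r_minus M a < rt" "rt < r_plus M a" and "0 \<le> \<alpha>" "\<alpha> < 1" "0 \<le> sin \<theta>"
    and S: "S \<subseteq> {r_minus M a<..rt}"
    and meas: "(\<lambda>r. ennreal ((g' r)\<^sup>2 * (r - r_minus M a) powr (2-\<alpha>)) * indicator S r) \<in> borel_measurable lborel"
  shows "ennreal (e3_weight_const rt \<alpha> * sin \<theta>)
      * (\<integral>\<^sup>+r. ennreal ((g' r)\<^sup>2 * (r - r_minus M a) powr (2-\<alpha>)) * indicator S r \<partial>lborel)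
    \<le> (\<integral>\<^sup>+r. ennreal ((Delta M a r / rho2 a r \<theta> * g' r)\<^sup>2 / (- Delta M a r) powr \<alpha> * rho2 a r \<theta> * sin \<theta>)
      * indicator S r \<partial>lborel)"
proof -
  have c: "0 \<le> e3_weight_const rt \<alpha> * sin \<theta>"
    using weight_consts_pos(2)[OF rt, of \<alpha>] \<open>0 \<le> sin \<theta>\<close> by simp
  have "e3_weight_const rt \<alpha> * sin \<theta> * ((g' r)\<^sup>2 * (r - r_minus M a) powr (2-\<alpha>))
    \<le> (Delta M a r / rho2 a r \<theta> * g' r)\<^sup>2 / (- Delta M a r) powr \<alpha> * rho2 a r \<theta> * sin \<theta>" if "r \<in> S" for r
  proof -
    have r: "r_minus M a < r" "r \<le> rt" using that S by auto
    have D: "Delta M a r = - ((r - r_minus M a) * (r_plus M a - r))" using neg_Delta_eq[of r] by simp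
    have "((r_plus M a - rt) powr (2-\<alpha>) / (rt\<^sup>2 + a\<^sup>2) * sin \<theta>) * ((g' r)\<^sup>2 * (r - r_minus M a) powr (2-\<alpha>))
      \<le> ((-((r - r_minus M a) * (r_plus M a - r))) / rho2 a r \<theta> * g' r)\<^sup>2
        / ((r - r_minus M a) * (r_plus M a - r)) powr \<alpha> * rho2 a r \<theta> * sin \<theta>"
      using r rt rho2_pos[OF r(1)] rho2_le[OF r] assms(3-5) by (intro e3_weight_ge) auto
    then show ?thesis by (simp only: D minus_minus e3_weight_const_def)
  qed
  then have "ennreal (e3_weight_const rt \<alpha> * sin \<theta>) * (ennreal ((g' r)\<^sup>2 * (r - r_minus M a) powr (2-\<alpha>)) * indicator S r)
    \<le> ennreal ((Delta M a r / rho2 a r \<theta> * g' r)\<^sup>2 / (- Delta M a r) powr \<alpha> * rho2 a r \<theta> * sin \<theta>) * indicator S r"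
    for r
    using c by (simp add: ennreal_mult'[symmetric] ennreal_leI split: split_indicator)
  then show ?thesis
    by (simp add: nn_integral_cmult[OF meas, symmetric] nn_integral_mono)
qed

lemma hardy_estimate_on_curve:
  fixes g g' \<psi> :: "real \<Rightarrow> real" and rt \<alpha> \<theta> K :: real
  defines "S \<equiv> {r. r_minus M a < r \<and> r \<le> rt \<and> \<psi> r \<le> K}"
  assumes rt: "r_minus M a < rt" "rt < r_plus M a" and al: "0 \<le> \<alpha>" "\<alpha> < 1"
    and sin: "0 \<le> sin \<theta>"
    and gd: "\<And>r. r_minus M a < r \<Longrightarrow> r \<le> rt \<Longrightarrow> (g has_real_derivative g' r) (at r)"
    and gc: "continuous_on {r_minus M a<..rt} g'"
    and \<psi>d: "\<And>r. r_minus M a < r \<Longrightarrow> r \<le> rt \<Longrightarrow> \<exists>y. (\<psi> has_real_derivative y) (at r) \<and> y < 0"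
  shows "(\<integral>\<^sup>+r. ennreal ((g r)\<^sup>2 / (- Delta M a r) powr \<alpha> * rho2 a r \<theta> * sin \<theta>) * indicator S r \<partial>lborel)
    \<le> ennreal (hardy_const rt \<alpha>) * (ennreal ((g rt)\<^sup>2 * rho2 a rt \<theta> * sin \<theta>) * indicator S rt
      + (\<integral>\<^sup>+r. ennreal ((Delta M a r / rho2 a r \<theta> * g' r)\<^sup>2 / (- Delta M a r) powr \<alpha> * rho2 a r \<theta> * sin \<theta>)
          * indicator S r \<partial>lborel))"
    (is "?L \<le> ennreal ?C * (ennreal ?B * _ + ?E)")
proof -
  define I where "I = (\<integral>\<^sup>+r. ennreal ((g' r)\<^sup>2 * (r - r_minus M a) powr (2-\<alpha>)) * indicator S r \<partial>lborel)"
  define cL cR where "cL = phi_weight_const rt \<alpha>" and "cR = e3_weight_const rt \<alpha>"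
  define Ka Kb where "Ka = 2 * (rt - r_minus M a) powr (1-\<alpha>) / (1-\<alpha>)" and "Kb = 4 / (1-\<alpha>)\<^sup>2"
  have pos: "0 \<le> cL" "0 \<le> cR" "0 \<le> ?C" "0 \<le> Ka" "0 \<le> Kb"
    using weight_consts_pos[OF rt] hardy_const_pos[OF rt al(2)] al by (auto simp: cL_def cR_def Ka_def Kb_def less_imp_le)
  have "S \<subseteq> {r_minus M a<..rt}" by (auto simp: S_def)
  have "\<forall>x\<in>{r_minus M a<..rt}. isCont g x" using gd DERIV_isCont by force
  then have "continuous_on {r_minus M a<..rt} g" by (rule continuous_at_imp_continuous_on)
  then have "?L \<le> ennreal (cL * sin \<theta>)
      * (\<integral>\<^sup>+r. ennreal ((g r)\<^sup>2 * (r - r_minus M a) powr (-\<alpha>)) * indicator S r \<partial>lborel)"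
    unfolding cL_def S_def
    by (intro nn_integral_phi_weight_le rt al sin borel_measurable_weight_on_sublevel \<psi>d) auto
  also have "\<dots> \<le> ennreal (cL * sin \<theta>) * (ennreal (Ka * (g rt)\<^sup>2) * indicator S rt + ennreal Kb * I)"
    unfolding I_def S_def Ka_def Kb_def
    using hardy_nn_integral_sublevel[OF al gd gc \<psi>d, of K] by (intro mult_left_mono) (simp_all add: mult.assoc)
  also have "\<dots> \<le> ennreal ?C * (ennreal ?B * indicator S rt + ennreal (cR * sin \<theta>) * I)"
  proof -
    have "cL * Ka * ((g rt)\<^sup>2 * sin \<theta>) \<le> ?C * rt\<^sup>2 * ((g rt)\<^sup>2 * sin \<theta>)"
      unfolding cL_def Ka_def using sin by (intro mult_right_mono hardy_const_dominates(1)[OF rt al(2)]) simp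
    also have "\<dots> = ?C * (rt\<^sup>2 * ((g rt)\<^sup>2 * sin \<theta>))" by (simp only: mult.assoc)
    also have "\<dots> \<le> ?C * (rho2 a rt \<theta> * ((g rt)\<^sup>2 * sin \<theta>))"
      using pos sin by (intro mult_left_mono mult_right_mono) (auto simp: rho2_def)
    finally have "cL * sin \<theta> * (Ka * (g rt)\<^sup>2) \<le> ?C * ?B"
      by (simp add: mult_ac)
    then have "ennreal (cL * sin \<theta>) * ennreal (Ka * (g rt)\<^sup>2) \<le> ennreal ?C * ennreal ?B"
      using pos sin by (simp add: ennreal_mult'[symmetric] ennreal_leI)
    moreover have "cL * Kb * sin \<theta> \<le> ?C * cR * sin \<theta>"
      unfolding cL_def cR_def Kb_def using sin by (intro mult_right_mono hardy_const_dominates(2)[OF rt al(2)])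
    then have "ennreal (cL * sin \<theta>) * ennreal Kb \<le> ennreal ?C * ennreal (cR * sin \<theta>)"
      using pos sin by (simp add: ennreal_mult'[symmetric] ennreal_leI mult_ac)
    ultimately show ?thesis
      by (simp add: distrib_left mult.assoc[symmetric] add_mono mult_right_mono)
  qed
  also have "ennreal (cR * sin \<theta>) * I \<le> ?E"
    unfolding cR_def I_def S_def
    by (intro nn_integral_e3_weight_ge rt al sin borel_measurable_weight_on_sublevel gc \<psi>d) auto
  finally show ?thesis by (simp add: mult_left_mono add_left_mono)
qed

end

section \<open>Integrating over the integral curves of e_3\<close>

context kerr_tortoise
begin

text \<open>rstar is only known on (r_-, r_+); extending it by 0 makes it Borel measurable on R.\<close>
definition rstar_ext :: "real \<Rightarrow> real" where
  "rstar_ext r = (if r_minus M a < r \<and> r < r_plus M a then rstar r else 0)"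

lemma borel_measurable_rstar_ext: "rstar_ext \<in> borel_measurable borel"
proof -
  have "\<forall>r\<in>{r_minus M a<..<r_plus M a}. isCont rstar r" using rstar_deriv DERIV_isCont by force
  then have "(\<lambda>r. indicator {r_minus M a<..<r_plus M a} r *\<^sub>R rstar r) \<in> borel_measurable borel"
    by (intro borel_measurable_continuous_on_indicator continuous_at_imp_continuous_on) simp_all
  moreover have "(\<lambda>r. indicator {r_minus M a<..<r_plus M a} r *\<^sub>R rstar r) = rstar_ext"
    by (auto simp: rstar_ext_def indicator_def)
  ultimately show ?thesis by simp
qed

definition slab :: "(real \<times> real \<times> real \<times> real) set" where
  "slab = {p. r_minus M a < fst (snd p) \<and> fst (snd p) < r_plus M a}"

lemma open_slab: "open slab"
proof -
  have "open ((\<lambda>p::real\<times>real\<times>real\<times>real. fst (snd p)) -` {r_minus M a<..<r_plus M a})"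
    by (intro open_vimage continuous_intros open_greaterThanLessThan)
  moreover have "slab = (\<lambda>p. fst (snd p)) -` {r_minus M a<..<r_plus M a}" by (auto simp: slab_def)
  ultimately show ?thesis by simp
qed

text \<open>The integrand of vol_int without the window 0 < phi < 2 pi: what remains is 2 pi-periodic in
  phi, so shifting phi by eta r does not change its integral over the window.\<close>
definition slab_density :: "real \<Rightarrow> real \<Rightarrow> (real \<Rightarrow> real \<Rightarrow> real \<Rightarrow> real \<Rightarrow> real)
    \<Rightarrow> real \<times> real \<times> real \<times> real \<Rightarrow> ennreal" where
  "slab_density rt u1 h p = indicator {r_minus M a<..rt} (fst (snd p)) * indicator {0<..<pi} (fst (snd (snd p)))
     * indicator {..u1} (rstar_ext (fst (snd p)) - fst p - fst (snd p) + r_minus M a)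
     * ennreal (h (fst p) (fst (snd p)) (fst (snd (snd p))) (snd (snd (snd p))))"

definition section_density :: "real \<Rightarrow> real \<Rightarrow> (real \<Rightarrow> real \<Rightarrow> real \<Rightarrow> real)
    \<Rightarrow> real \<times> real \<times> real \<Rightarrow> ennreal" where
  "section_density rt u1 h q = indicator {0<..<pi} (fst (snd q))
     * indicator {..u1} (rstar_ext rt - fst q - rt + r_minus M a) * ennreal (h (fst q) (fst (snd q)) (snd (snd q)))"

lemma vol_int_eq_slab_density:
  assumes "rt < r_plus M a"
  shows "vol_int M a rstar rt u1 G = (\<integral>\<^sup>+p. angle_window (snd (snd (snd p)))
    * slab_density rt u1 (\<lambda>t r \<theta> \<phi>. G t r \<theta> \<phi> * rho2 a r \<theta> * sin \<theta>) p \<partial>lborel)"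
  unfolding vol_int_def using assms
  by (intro nn_integral_cong)
    (auto simp: indicator_def f_minus_def rstar_ext_def slab_density_def split: prod.split)

lemma surf_int_eq_section_density:
  assumes "r_minus M a < rt" "rt < r_plus M a"
  shows "surf_int M a rstar rt u1 G = (\<integral>\<^sup>+q. angle_window (snd (snd q))
    * section_density rt u1 (\<lambda>t \<theta> \<phi>. G t rt \<theta> \<phi> * rho2 a rt \<theta> * sin \<theta>) q \<partial>lborel)"
  unfolding surf_int_def using assms
  by (intro nn_integral_cong)
    (auto simp: indicator_def f_minus_def rstar_ext_def section_density_def split: prod.split)

lemma slab_density_cong:
  assumes "\<And>t r \<theta> \<phi>. r_minus M a < r \<Longrightarrow> r \<le> rt \<Longrightarrow> h t r \<theta> \<phi> = h' t r \<theta> \<phi>"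
  shows "slab_density rt u1 h = slab_density rt u1 h'"
  using assms by (auto simp: slab_density_def indicator_def fun_eq_iff)

lemma slab_density_periodic:
  assumes "\<And>t r x y k. h t r x (y + 2 * pi * of_int k) = h t r x y"
  shows "slab_density rt u1 h (t, r, x, y + 2 * pi * of_int k) = slab_density rt u1 h (t, r, x, y)"
  by (simp add: slab_density_def assms)

lemma section_density_periodic:
  assumes "\<And>t x y k. h t x (y + 2 * pi * of_int k) = h t x y"
  shows "section_density rt u1 h (t, x, y + 2 * pi * of_int k) = section_density rt u1 h (t, x, y)"
  by (simp add: section_density_def assms)

lemma borel_measurable_slab_density:
  assumes "rt < r_plus M a"
    and cont: "continuous_on slab (\<lambda>p. h (fst p) (fst (snd p)) (fst (snd (snd p))) (snd (snd (snd p))))"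
  shows "slab_density rt u1 h \<in> borel_measurable borel"
proof -
  define hh where "hh p = h (fst p) (fst (snd p)) (fst (snd (snd p))) (snd (snd (snd p)))" for p
  have "(\<lambda>p. indicator slab p *\<^sub>R hh p) \<in> borel_measurable borel"
    using open_slab cont by (intro borel_measurable_continuous_on_indicator) (auto simp: hh_def)
  then have h: "(\<lambda>p. ennreal (indicator slab p *\<^sub>R hh p)) \<in> borel_measurable borel"
    by (rule measurable_compose) simp
  have coord: "(\<lambda>p::real\<times>real\<times>real\<times>real. fst (snd p)) \<in> borel_measurable borel"
    "(\<lambda>p::real\<times>real\<times>real\<times>real. fst (snd (snd p))) \<in> borel_measurable borel"
    "(\<lambda>p::real\<times>real\<times>real\<times>real. fst p) \<in> borel_measurable borel"
    by (intro borel_measurable_continuous_onI continuous_intros)+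
  have "(\<lambda>p::real\<times>real\<times>real\<times>real. rstar_ext (fst (snd p))) \<in> borel_measurable borel"
    by (rule measurable_comp_continuous[OF borel_measurable_rstar_ext]) (intro continuous_intros)
  from borel_measurable_diff[OF this coord(3)]
  have "(\<lambda>p::real\<times>real\<times>real\<times>real. rstar_ext (fst (snd p)) - fst p) \<in> borel_measurable borel"
    by simp
  from borel_measurable_diff[OF this coord(1)]
  have "(\<lambda>p::real\<times>real\<times>real\<times>real. rstar_ext (fst (snd p)) - fst p - fst (snd p))
    \<in> borel_measurable borel" by simp
  from borel_measurable_add[OF this borel_measurable_const]
  have fm: "(\<lambda>p::real\<times>real\<times>real\<times>real. rstar_ext (fst (snd p)) - fst p - fst (snd p) + r_minus M a)
    \<in> borel_measurable borel"
    by simp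
  have "(\<lambda>p. indicator {r_minus M a<..rt} (fst (snd p)) * indicator {0<..<pi} (fst (snd (snd p)))
     * indicator {..u1} (rstar_ext (fst (snd p)) - fst p - fst (snd p) + r_minus M a)
     * ennreal (indicator slab p *\<^sub>R hh p) :: ennreal) \<in> borel_measurable borel"
    by (intro borel_measurable_times_ennreal borel_measurable_indicator_comp coord fm h) auto
  moreover have "slab_density rt u1 h = (\<lambda>p. indicator {r_minus M a<..rt} (fst (snd p))
     * indicator {0<..<pi} (fst (snd (snd p)))
     * indicator {..u1} (rstar_ext (fst (snd p)) - fst p - fst (snd p) + r_minus M a)
     * ennreal (indicator slab p *\<^sub>R hh p))"
  proof
    fix p
    show "slab_density rt u1 h p = indicator {r_minus M a<..rt} (fst (snd p)) * indicator {0<..<pi} (fst (snd (snd p)))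
     * indicator {..u1} (rstar_ext (fst (snd p)) - fst p - fst (snd p) + r_minus M a)
     * ennreal (indicator slab p *\<^sub>R hh p)"
      using assms(1) by (cases "fst (snd p) \<in> {r_minus M a<..rt}") (auto simp: slab_density_def hh_def slab_def)
  qed
  ultimately show ?thesis by simp
qed

lemma borel_measurable_section_density:
  assumes "continuous_on UNIV (\<lambda>q. h (fst q) (fst (snd q)) (snd (snd q)))"
  shows "section_density rt u1 h \<in> borel_measurable borel"
proof -
  have "(\<lambda>q. ennreal (h (fst q) (fst (snd q)) (snd (snd q)))) \<in> borel_measurable borel"
    by (rule measurable_compose[OF borel_measurable_continuous_onI[OF assms]]) simp
  moreover have "(\<lambda>q::real\<times>real\<times>real. fst (snd q)) \<in> borel_measurable borel"
    "(\<lambda>q::real\<times>real\<times>real. rstar_ext rt - fst q - rt + r_minus M a) \<in> borel_measurable borel"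
    by (intro borel_measurable_continuous_onI continuous_intros)+
  ultimately show ?thesis
    unfolding section_density_def[abs_def]
    by (intro borel_measurable_times_ennreal borel_measurable_indicator_comp) auto
qed

text \<open>The integral along the e_3-curve r \<mapsto> (T - r^*(r), r, theta, P - eta(r)), for q = (T, theta, P).\<close>
definition sheared_integral :: "real \<Rightarrow> real \<Rightarrow> (real \<Rightarrow> real \<Rightarrow> real \<Rightarrow> real \<Rightarrow> real)
    \<Rightarrow> real \<times> real \<times> real \<Rightarrow> ennreal" where
  "sheared_integral rt u1 h q = (\<integral>\<^sup>+r. angle_window (snd (snd q))
     * slab_density rt u1 h (fst q - rstar_ext r, r, fst (snd q), snd (snd q) - eta r) \<partial>lborel)"

definition shifted_section :: "real \<Rightarrow> real \<Rightarrow> (real \<Rightarrow> real \<Rightarrow> real \<Rightarrow> real)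
    \<Rightarrow> real \<times> real \<times> real \<Rightarrow> ennreal" where
  "shifted_section rt u1 h q = angle_window (snd (snd q))
     * section_density rt u1 h (fst q - rstar_ext rt, fst (snd q), snd (snd q) - eta rt)"

lemma vol_int_eq_sheared_integral:
  assumes "rt < r_plus M a"
    and cont: "continuous_on slab (\<lambda>p. h (fst p) (fst (snd p)) (fst (snd (snd p))) (snd (snd (snd p))))"
    and per: "\<And>t r x y k. h t r x (y + 2 * pi * of_int k) = h t r x y"
    and h: "\<And>t r \<theta> \<phi>. r_minus M a < r \<Longrightarrow> r \<le> rt \<Longrightarrow> G t r \<theta> \<phi> * rho2 a r \<theta> * sin \<theta> = h t r \<theta> \<phi>"
  shows "vol_int M a rstar rt u1 G = (\<integral>\<^sup>+q. sheared_integral rt u1 h q \<partial>lborel)"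
proof -
  have "slab_density rt u1 (\<lambda>t r \<theta> \<phi>. G t r \<theta> \<phi> * rho2 a r \<theta> * sin \<theta>) = slab_density rt u1 h"
    using h by (intro slab_density_cong)
  then show ?thesis
    unfolding vol_int_eq_slab_density[OF assms(1)] sheared_integral_def
    using nn_integral_shear[OF borel_measurable_slab_density[OF assms(1) cont] borel_measurable_rstar_ext
        borel_measurable_eta slab_density_periodic[OF per]] by simp
qed

lemma borel_measurable_sheared_integral:
  assumes "rt < r_plus M a"
    and "continuous_on slab (\<lambda>p. h (fst p) (fst (snd p)) (fst (snd (snd p))) (snd (snd (snd p))))"
  shows "sheared_integral rt u1 h \<in> borel_measurable borel"
  unfolding sheared_integral_def[abs_def]
  by (rule borel_measurable_nn_integral_shear[OF borel_measurable_slab_density[OF assms]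
        borel_measurable_rstar_ext borel_measurable_eta])

lemma surf_int_eq_shifted_section:
  assumes "r_minus M a < rt" "rt < r_plus M a"
    and cont: "continuous_on UNIV (\<lambda>q. h (fst q) (fst (snd q)) (snd (snd q)))"
    and per: "\<And>t x y k. h t x (y + 2 * pi * of_int k) = h t x y"
    and h: "\<And>t \<theta> \<phi>. G t rt \<theta> \<phi> * rho2 a rt \<theta> * sin \<theta> = h t \<theta> \<phi>"
  shows "surf_int M a rstar rt u1 G = (\<integral>\<^sup>+q. shifted_section rt u1 h q \<partial>lborel)"
proof -
  have "(\<lambda>t \<theta> \<phi>. G t rt \<theta> \<phi> * rho2 a rt \<theta> * sin \<theta>) = h"
    using h by blast
  then show ?thesis
    unfolding surf_int_eq_section_density[OF assms(1,2)] shifted_section_def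
    using nn_integral_translate_periodic[OF borel_measurable_section_density[OF cont]
        section_density_periodic[OF per]] by simp
qed

lemma borel_measurable_shifted_section:
  assumes "continuous_on UNIV (\<lambda>q. h (fst q) (fst (snd q)) (snd (snd q)))"
  shows "shifted_section rt u1 h \<in> borel_measurable borel"
  unfolding shifted_section_def[abs_def]
  by (intro borel_measurable_times_ennreal measurable_comp_continuous[OF borel_measurable_indicator]
      measurable_comp_continuous[OF borel_measurable_section_density[OF assms]])
    (auto intro!: continuous_intros)

lemma tortoise_sublevel_decreasing:
  assumes "r_minus M a < r" "r < r_plus M a"
  shows "\<exists>y. ((\<lambda>r. 2 * rstar r - r) has_real_derivative y) (at r) \<and> y < 0"
proof (intro exI conjI)
  show "((\<lambda>r. 2 * rstar r - r) has_real_derivative 2 * ((r\<^sup>2 + a\<^sup>2) / Delta M a r) - 1) (at r)"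
    using rstar_deriv[OF assms] by (auto intro!: derivative_eq_intros)
  have "(r\<^sup>2 + a\<^sup>2) / Delta M a r < 0"
    using Delta_neg[OF assms] assms r_minus_pos by (simp add: divide_pos_neg add_pos_nonneg)
  then show "2 * ((r\<^sup>2 + a\<^sup>2) / Delta M a r) - 1 < 0" by linarith
qed

definition phi_density :: "real \<Rightarrow> (pt \<Rightarrow> real) \<Rightarrow> real \<Rightarrow> real \<Rightarrow> real \<Rightarrow> real \<Rightarrow> real" where
  "phi_density \<alpha> F t r \<theta> \<phi> = (F (bl_point t r \<theta> \<phi>))\<^sup>2 / (- Delta M a r) powr \<alpha> * rho2 a r \<theta> * sin \<theta>"

definition e3_density :: "real \<Rightarrow> (pt \<Rightarrow> real) \<Rightarrow> real \<Rightarrow> real \<Rightarrow> real \<Rightarrow> real \<Rightarrow> real" where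
  "e3_density \<alpha> F t r \<theta> \<phi> = (e3_differential M a F t r \<theta> \<phi>)\<^sup>2 / (- Delta M a r) powr \<alpha> * rho2 a r \<theta> * sin \<theta>"

definition boundary_density :: "real \<Rightarrow> (pt \<Rightarrow> real) \<Rightarrow> real \<Rightarrow> real \<Rightarrow> real \<Rightarrow> real" where
  "boundary_density rt F t \<theta> \<phi> = (F (bl_point t rt \<theta> \<phi>))\<^sup>2 * rho2 a rt \<theta> * sin \<theta>"

lemma phi_density_periodic: "phi_density \<alpha> F t r x (y + 2 * pi * of_int k) = phi_density \<alpha> F t r x y"
  by (simp add: phi_density_def bl_point_periodic)

lemma e3_density_periodic: "e3_density \<alpha> F t r x (y + 2 * pi * of_int k) = e3_density \<alpha> F t r x y"
  by (simp add: e3_density_def e3_differential_def bl_point_periodic bl_dphi_periodic)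

lemma boundary_density_periodic: "boundary_density rt F t x (y + 2 * pi * of_int k) = boundary_density rt F t x y"
  by (simp add: boundary_density_def bl_point_periodic)

lemma slab_density_along_e3_curve:
  assumes "0 < P" "P < 2 * pi" "0 < \<theta>" "\<theta> < pi" "rt < r_plus M a"
  shows "angle_window P * slab_density rt u1 h (T - rstar_ext r, r, \<theta>, P - eta r)
    = ennreal (h (T - rstar r) r \<theta> (P - eta r))
      * indicator {r. r_minus M a < r \<and> r \<le> rt \<and> 2 * rstar r - r \<le> u1 + T - r_minus M a} r"
  using assms by (auto simp: slab_density_def rstar_ext_def indicator_def)

lemma section_density_along_e3_curve:
  assumes "0 < P" "P < 2 * pi" "0 < \<theta>" "\<theta> < pi" "r_minus M a < rt" "rt < r_plus M a"
  shows "angle_window P * section_density rt u1 h (T - rstar_ext rt, \<theta>, P - eta rt)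
    = ennreal (h (T - rstar rt) \<theta> (P - eta rt))
      * indicator {r. r_minus M a < r \<and> r \<le> rt \<and> 2 * rstar r - r \<le> u1 + T - r_minus M a} rt"
  using assms by (auto simp: section_density_def rstar_ext_def indicator_def)

lemma continuous_on_slab_bl_point:
  "continuous_on slab (\<lambda>p. bl_point (fst p) (fst (snd p)) (fst (snd (snd p))) (snd (snd (snd p))))"
  unfolding bl_point_def by (intro continuous_intros)

lemma Delta_neq_zero_on_slab: "p \<in> slab \<Longrightarrow> Delta M a (fst (snd p)) \<noteq> 0"
  using Delta_neg by (force simp: slab_def)

lemma rho2_neq_zero_on_slab: "p \<in> slab \<Longrightarrow> rho2 a (fst (snd p)) \<theta> \<noteq> 0"
  unfolding slab_def using rho2_pos[of "fst (snd p)" \<theta>] by auto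

context
  fixes F :: "pt \<Rightarrow> real" and U :: "pt set"
  assumes smooth: "smooth_on U F" and kerr_U: "kerr_interior M a \<subseteq> U"
begin

lemma bl_point_in_U: "r_minus M a < r \<Longrightarrow> r < r_plus M a \<Longrightarrow> bl_point t r \<theta> \<phi> \<in> U"
  using bl_point_in_kerr_interior kerr_U by blast

lemma bl_point_slab_subset_U:
  "(\<lambda>p. bl_point (fst p) (fst (snd p)) (fst (snd (snd p))) (snd (snd (snd p)))) ` slab \<subseteq> U"
  using bl_point_in_U by (auto simp: slab_def)

lemma continuous_on_phi_density:
  "continuous_on slab (\<lambda>p. phi_density \<alpha> F (fst p) (fst (snd p)) (fst (snd (snd p))) (snd (snd (snd p))))"
  unfolding phi_density_def
  by (intro continuous_intros continuous_on_compose2[OF smooth_on_continuous[OF smooth]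
        continuous_on_slab_bl_point bl_point_slab_subset_U])
    (use Delta_neq_zero_on_slab in auto)

lemma continuous_on_e3_density:
  "continuous_on slab (\<lambda>p. e3_density \<alpha> F (fst p) (fst (snd p)) (fst (snd (snd p))) (snd (snd (snd p))))"
proof -
  have "continuous_on slab (\<lambda>p. bl_dphi (fst (snd (snd p))) (snd (snd (snd p))))"
    unfolding bl_dphi_def by (intro continuous_intros)
  note differential = continuous_on_differential[OF smooth continuous_on_slab_bl_point _ bl_point_slab_subset_U]
  show ?thesis
    unfolding e3_density_def e3_differential_def
    by (intro continuous_intros differential \<open>continuous_on slab _\<close>)
      (use Delta_neq_zero_on_slab rho2_neq_zero_on_slab in auto)
qed

lemma continuous_on_boundary_density:
  assumes "r_minus M a < rt" "rt < r_plus M a"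
  shows "continuous_on UNIV (\<lambda>q. boundary_density rt F (fst q) (fst (snd q)) (snd (snd q)))"
proof -
  have "continuous_on UNIV (\<lambda>q::real\<times>real\<times>real. bl_point (fst q) rt (fst (snd q)) (snd (snd q)))"
    unfolding bl_point_def by (intro continuous_intros)
  moreover have "(\<lambda>q::real\<times>real\<times>real. bl_point (fst q) rt (fst (snd q)) (snd (snd q))) ` UNIV \<subseteq> U"
    using bl_point_in_U assms by auto
  ultimately show ?thesis unfolding boundary_density_def
    by (intro continuous_intros continuous_on_compose2[OF smooth_on_continuous[OF smooth]])
qed

lemma has_real_derivative_along_e3_curve:
  assumes "r_minus M a < r" "r < r_plus M a"
  shows "((\<lambda>r. F (e3_curve T \<theta> P r)) has_real_derivative
    differential F (e3_curve T \<theta> P r) (e3_curve_velocity \<theta> P r)) (at r)"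
proof -
  have "e3_curve T \<theta> P r \<in> U" unfolding e3_curve_def using bl_point_in_U assms by blast
  from has_real_derivative_comp_curve[OF smooth this has_vector_derivative_e3_curve[OF assms]]
  show ?thesis .
qed

lemma continuous_on_differential_along_e3_curve:
  "continuous_on {r_minus M a<..<r_plus M a}
    (\<lambda>r. differential F (e3_curve T \<theta> P r) (e3_curve_velocity \<theta> P r))"
proof (rule continuous_on_differential[OF smooth])
  show "continuous_on {r_minus M a<..<r_plus M a} (e3_curve T \<theta> P)"
    using has_vector_derivative_e3_curve
    by (intro continuous_at_imp_continuous_on ballI has_vector_derivative_continuous) auto
  show "continuous_on {r_minus M a<..<r_plus M a} (e3_curve_velocity \<theta> P)"
    unfolding e3_curve_velocity_def using Delta_neg
    by (intro continuous_intros continuous_on_subset[OF continuous_on_eta]) force+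
  show "e3_curve T \<theta> P ` {r_minus M a<..<r_plus M a} \<subseteq> U"
    unfolding e3_curve_def using bl_point_in_U by auto
qed

lemma hardy_estimate_sheared:
  assumes al: "0 \<le> \<alpha>" "\<alpha> < 1" and rt: "r_minus M a < rt" "rt < r_plus M a"
  shows "sheared_integral rt u1 (phi_density \<alpha> F) (T, \<theta>, P)
    \<le> ennreal (hardy_const rt \<alpha>) * (shifted_section rt u1 (boundary_density rt F) (T, \<theta>, P)
      + sheared_integral rt u1 (e3_density \<alpha> F) (T, \<theta>, P))"
proof (cases "0 < P \<and> P < 2 * pi \<and> 0 < \<theta> \<and> \<theta> < pi")
  case False
  then have "(\<lambda>r. angle_window P * slab_density rt u1 (phi_density \<alpha> F) (T - rstar_ext r, r, \<theta>, P - eta r))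
      = (\<lambda>r. 0)"
    by (auto simp: slab_density_def indicator_def)
  then show ?thesis by (simp add: sheared_integral_def)
next
  case True
  then have P: "0 < P" "P < 2 * pi" and \<theta>: "0 < \<theta>" "\<theta> < pi" by auto
  define S where "S = {r. r_minus M a < r \<and> r \<le> rt \<and> 2 * rstar r - r \<le> u1 + T - r_minus M a}"
  define g where "g r = F (e3_curve T \<theta> P r)" for r
  define g' where "g' r = differential F (e3_curve T \<theta> P r) (e3_curve_velocity \<theta> P r)" for r
  have in_range: "r < r_plus M a" if "r \<le> rt" for r using that rt by simp
  have "sheared_integral rt u1 (phi_density \<alpha> F) (T, \<theta>, P)
      = (\<integral>\<^sup>+r. ennreal ((g r)\<^sup>2 / (- Delta M a r) powr \<alpha> * rho2 a r \<theta> * sin \<theta>) * indicator S r \<partial>lborel)"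
    by (simp add: sheared_integral_def slab_density_along_e3_curve[OF P \<theta> rt(2)] S_def phi_density_def
        g_def e3_curve_def)
  also have "\<dots> \<le> ennreal (hardy_const rt \<alpha>) * (ennreal ((g rt)\<^sup>2 * rho2 a rt \<theta> * sin \<theta>) * indicator S rt
      + (\<integral>\<^sup>+r. ennreal ((Delta M a r / rho2 a r \<theta> * g' r)\<^sup>2 / (- Delta M a r) powr \<alpha> * rho2 a r \<theta> * sin \<theta>)
          * indicator S r \<partial>lborel))"
    unfolding S_def
  proof (rule hardy_estimate_on_curve[OF rt al])
    show "0 \<le> sin \<theta>" using \<theta> by (simp add: sin_ge_zero)
    show "(g has_real_derivative g' r) (at r)" if "r_minus M a < r" "r \<le> rt" for r
      unfolding g_def[abs_def] g'_def using that in_range by (intro has_real_derivative_along_e3_curve)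
    show "continuous_on {r_minus M a<..rt} g'"
      unfolding g'_def[abs_def] using in_range
      by (intro continuous_on_subset[OF continuous_on_differential_along_e3_curve]) auto
    show "\<exists>y. ((\<lambda>r. 2 * rstar r - r) has_real_derivative y) (at r) \<and> y < 0"
      if "r_minus M a < r" "r \<le> rt" for r
      using that in_range by (intro tortoise_sublevel_decreasing)
  qed
  also have "\<dots> = ennreal (hardy_const rt \<alpha>) * (shifted_section rt u1 (boundary_density rt F) (T, \<theta>, P)
      + sheared_integral rt u1 (e3_density \<alpha> F) (T, \<theta>, P))"
  proof -
    have "e3_density \<alpha> F (T - rstar r) r \<theta> (P - eta r)
        = (Delta M a r / rho2 a r \<theta> * g' r)\<^sup>2 / (- Delta M a r) powr \<alpha> * rho2 a r \<theta> * sin \<theta>"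
      if "r \<in> S" for r
      using that in_range by (simp add: e3_density_def g'_def e3_differential_along_e3_curve S_def)
    then have "(\<integral>\<^sup>+r. ennreal (e3_density \<alpha> F (T - rstar r) r \<theta> (P - eta r)) * indicator S r \<partial>lborel)
        = (\<integral>\<^sup>+r. ennreal ((Delta M a r / rho2 a r \<theta> * g' r)\<^sup>2 / (- Delta M a r) powr \<alpha> * rho2 a r \<theta> * sin \<theta>)
          * indicator S r \<partial>lborel)"
      by (intro nn_integral_cong) (simp split: split_indicator)
    moreover have "boundary_density rt F (T - rstar rt) \<theta> (P - eta rt) = (g rt)\<^sup>2 * rho2 a rt \<theta> * sin \<theta>"
      by (simp add: boundary_density_def g_def e3_curve_def)
    ultimately show ?thesis
      unfolding shifted_section_def sheared_integral_def fst_conv snd_conv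
        section_density_along_e3_curve[OF P \<theta> rt] slab_density_along_e3_curve[OF P \<theta> rt(2)] S_def[symmetric]
      by (simp only:)
  qed
  finally show ?thesis .
qed

lemma main_estimate:
  assumes al: "0 \<le> \<alpha>" "\<alpha> < 1" and rt: "r_minus M a < rt" "rt < r_plus M a"
  shows "vol_int M a rstar rt u1 (\<lambda>t r \<theta> \<phi>. (BL F t r \<theta> \<phi>)\<^sup>2 / (- Delta M a r) powr \<alpha>)
    \<le> ennreal (hardy_const rt \<alpha>) * (surf_int M a rstar rt u1 (\<lambda>t r \<theta> \<phi>. (BL F t r \<theta> \<phi>)\<^sup>2)
      + vol_int M a rstar rt u1 (\<lambda>t r \<theta> \<phi>. (e3 M a F t r \<theta> \<phi>)\<^sup>2 / (- Delta M a r) powr \<alpha>))"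
proof -
  have "vol_int M a rstar rt u1 (\<lambda>t r \<theta> \<phi>. (BL F t r \<theta> \<phi>)\<^sup>2 / (- Delta M a r) powr \<alpha>)
      = (\<integral>\<^sup>+q. sheared_integral rt u1 (phi_density \<alpha> F) q \<partial>lborel)"
    by (intro vol_int_eq_sheared_integral rt continuous_on_phi_density phi_density_periodic)
      (simp add: BL_eq_bl_point phi_density_def)
  moreover have "vol_int M a rstar rt u1 (\<lambda>t r \<theta> \<phi>. (e3 M a F t r \<theta> \<phi>)\<^sup>2 / (- Delta M a r) powr \<alpha>)
      = (\<integral>\<^sup>+q. sheared_integral rt u1 (e3_density \<alpha> F) q \<partial>lborel)"
    using rt by (intro vol_int_eq_sheared_integral continuous_on_e3_density e3_density_periodic)
      (simp_all add: e3_density_def e3_eq_e3_differential[OF smooth bl_point_in_U])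
  moreover have "surf_int M a rstar rt u1 (\<lambda>t r \<theta> \<phi>. (BL F t r \<theta> \<phi>)\<^sup>2)
      = (\<integral>\<^sup>+q. shifted_section rt u1 (boundary_density rt F) q \<partial>lborel)"
    by (intro surf_int_eq_shifted_section rt continuous_on_boundary_density boundary_density_periodic)
      (simp add: BL_eq_bl_point boundary_density_def)
  moreover have "sheared_integral rt u1 (phi_density \<alpha> F) q \<le> ennreal (hardy_const rt \<alpha>)
      * (shifted_section rt u1 (boundary_density rt F) q + sheared_integral rt u1 (e3_density \<alpha> F) q)" for q
    using hardy_estimate_sheared[OF al rt, of u1 "fst q" "fst (snd q)" "snd (snd q)"] by simp
  ultimately show ?thesis
    using borel_measurable_sheared_integral[OF rt(2) continuous_on_e3_density]
      borel_measurable_shifted_section[OF continuous_on_boundary_density[OF rt]]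
    by (simp add: nn_integral_add[symmetric] nn_integral_cmult[symmetric] nn_integral_mono)
qed

end

end

theorem mainTheorem9:
  fixes M a \<alpha> u1 :: real and rstar :: "real \<Rightarrow> real"
  assumes "M > 0" and "0 < \<bar>a\<bar>" and "\<bar>a\<bar> < M"
    and "0 \<le> \<alpha>" and "\<alpha> < 1"
    and "\<forall>r. r_minus M a < r \<and> r < r_plus M a \<longrightarrow>
           (rstar has_real_derivative (r\<^sup>2 + a\<^sup>2) / Delta M a r) (at r)"
  shows "\<exists>rt C. r_minus M a < rt \<and> rt < r_plus M a \<and> C > 0 \<and>
    (\<forall>F. smooth_on_kerr M a F \<longrightarrow>
       vol_int M a rstar rt u1 (\<lambda>t r \<theta> \<phi>. (BL F t r \<theta> \<phi>)\<^sup>2 / (- Delta M a r) powr \<alpha>)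
       \<le> ennreal C * (surf_int M a rstar rt u1 (\<lambda>t r \<theta> \<phi>. (BL F t r \<theta> \<phi>)\<^sup>2)
            + vol_int M a rstar rt u1 (\<lambda>t r \<theta> \<phi>. (e3 M a F t r \<theta> \<phi>)\<^sup>2 / (- Delta M a r) powr \<alpha>)))"
proof -
  interpret kerr_tortoise M a rstar
    using assms by unfold_locales auto
  have rt: "r_minus M a < M" "M < r_plus M a"
    by (rule r_minus_less_M M_less_r_plus)+
  show ?thesis
  proof (rule exI[of _ M], rule exI[of _ "hardy_const M \<alpha>"], intro conjI allI impI rt)
    show "0 < hardy_const M \<alpha>" using hardy_const_pos[OF rt assms(5)] .
    fix F assume "smooth_on_kerr M a F"
    then obtain U where "smooth_on U F" "kerr_interior M a \<subseteq> U"
      unfolding smooth_on_kerr_def by blast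
    from main_estimate[OF this assms(4,5) rt] show "vol_int M a rstar M u1
        (\<lambda>t r \<theta> \<phi>. (BL F t r \<theta> \<phi>)\<^sup>2 / (- Delta M a r) powr \<alpha>)
      \<le> ennreal (hardy_const M \<alpha>) * (surf_int M a rstar M u1 (\<lambda>t r \<theta> \<phi>. (BL F t r \<theta> \<phi>)\<^sup>2)
        + vol_int M a rstar M u1 (\<lambda>t r \<theta> \<phi>. (e3 M a F t r \<theta> \<phi>)\<^sup>2 / (- Delta M a r) powr \<alpha>))" .
  qed
qed

end
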